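(* Let $\varepsilon>0$, $\theta_0>0$, $\Delta t>0$, $A\ge0$, $N\in\mathbb{N}$, $h=L/N$, and assume $\mathcal{M}\equiv1$. Consider the scheme: given $\phi^n,\phi^{n-1}\in\mathcal{C}_{\rm per}$, find $\phi^{n+1},\mu^{n+1}\in\mathcal{C}_{\rm per}$ with $$\frac{\tfrac32\phi^{n+1}-2\phi^n+\tfrac12\phi^{n-1}}{\Delta t}=\Delta_h\mu^{n+1},$$ $$\mu^{n+1}=\ln(1+\phi^{n+1})-\ln(1-\phi^{n+1})-\theta_0(2\phi^n-\phi^{n-1})-A\Delta t\,\Delta_h(\phi^{n+1}-\phi^n)-\varepsilon^2\Delta_h\phi^{n+1}.$$ Given $\phi^n,\phi^{n-1}\in\mathcal{C}_{\rm per}$ with $\|\phi^k\|_\infty\le M$, $k=n,n-1$, for some $M>0$, and $|\overline{\phi^n}|=|\overline{\phi^{n-1}}|<1$ with $\overline{\phi^n}=\overline{\phi^{n-1}}$, there exists a unique solution $\phi^{n+1}\in\mathcal{C}_{\rm per}$ of this scheme with $\phi^{n+1}-\overline{\phi^n}\in\mathring{\mathcal{C}}_{\rm per}$ and $\|\phi^{n+1}\|_\infty<1$.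
   Context: $\Omega=(0,L)^3$, periodic; $p_i=(i-\tfrac12)h$. $\mathcal{C}_{\rm per}$: real $N$-periodic grid functions on cell centers; $\langle\nu,\xi\rangle=h^3\sum_{i,j,k=1}^N\nu_{i,j,k}\xi_{i,j,k}$; $\overline{\nu}=|\Omega|^{-1}\langle\nu,1\rangle$; $\mathring{\mathcal{C}}_{\rm per}=\{\overline\nu=0\}$; $\|\nu\|_\infty=\max|\nu_{i,j,k}|$. $\Delta_h$: standard 7-point discrete Laplacian. $A$ is the coefficient of a Douglas–Dupont-type regularization term. *)

theory Defs
  imports Complex_Main
begin

text \<open>Grid functions on cell centres p_i = (i - 1/2) h, indexed by integers
  (i,j,k); membership in C_per is N-periodicity in each index.\<close>

type_synonym gridfun = "int \<Rightarrow> int \<Rightarrow> int \<Rightarrow> real"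

definition per :: "nat \<Rightarrow> gridfun \<Rightarrow> bool" where
  "per N \<nu> \<longleftrightarrow> (\<forall>i j k. \<nu> (i + int N) j k = \<nu> i j k \<and>
                           \<nu> i (j + int N) k = \<nu> i j k \<and>
                           \<nu> i j (k + int N) = \<nu> i j k)"

definition ginner :: "real \<Rightarrow> nat \<Rightarrow> gridfun \<Rightarrow> gridfun \<Rightarrow> real" where
  "ginner h N \<nu> \<xi> = h ^ 3 * (\<Sum>i\<in>{1..int N}. \<Sum>j\<in>{1..int N}. \<Sum>k\<in>{1..int N}.
       \<nu> i j k * \<xi> i j k)"

definition gmean :: "real \<Rightarrow> nat \<Rightarrow> gridfun \<Rightarrow> real" where
  "gmean L N \<nu> = ginner (L / real N) N \<nu> (\<lambda>_ _ _. 1) / L ^ 3"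

definition gsupnorm :: "nat \<Rightarrow> gridfun \<Rightarrow> real" where
  "gsupnorm N \<nu> = Max {\<bar>\<nu> i j k\<bar> | i j k. i \<in> {1..int N} \<and> j \<in> {1..int N} \<and> k \<in> {1..int N}}"

definition lap :: "real \<Rightarrow> gridfun \<Rightarrow> gridfun" where
  "lap h \<nu> i j k =
     (\<nu> (i + 1) j k - 2 * \<nu> i j k + \<nu> (i - 1) j k) / h ^ 2 +
     (\<nu> i (j + 1) k - 2 * \<nu> i j k + \<nu> i (j - 1) k) / h ^ 2 +
     (\<nu> i j (k + 1) - 2 * \<nu> i j k + \<nu> i j (k - 1)) / h ^ 2"

end

theory Submission
  imports Defs "HOL-Analysis.Analysis" "HOL-Real_Asymp.Real_Asymp"
begin

text \<open>Write the unknown as \<open>\<phi> = \<psi>(w) = (2/3)(2\<phi>\<^sup>n - \<phi>\<^sup>n\<^sup>-\<^sup>1/2 + \<Delta>t \<Delta>\<^sub>h w)\<close>.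
  Then \<open>\<psi>(w)\<close> has the mean of \<open>\<phi>\<^sup>n\<close>, and the first equation of the scheme becomes
  \<open>\<Delta>\<^sub>h \<mu> = \<Delta>\<^sub>h w\<close>. The convex energy
  \<open>J(w) = \<Sum> F(\<psi>(w)) - \<theta>\<^sub>0\<langle>2\<phi>\<^sup>n - \<phi>\<^sup>n\<^sup>-\<^sup>1, \<psi>(w)\<rangle> + (A\<Delta>t/2)|\<nabla>\<^sub>h(\<psi>(w) - \<phi>\<^sup>n)|\<^sup>2
  + (\<epsilon>\<^sup>2/2)|\<nabla>\<^sub>h\<psi>(w)|\<^sup>2 + (\<Delta>t/3)|\<nabla>\<^sub>h w|\<^sup>2\<close>, with
  \<open>F(x) = (1+x)ln(1+x) + (1-x)ln(1-x)\<close>, has gradient \<open>(2\<Delta>t/3)(\<Delta>\<^sub>h \<mu>(w) - \<Delta>\<^sub>h w)\<close>.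
  Normalised by \<open>w(1,1,1) = 0\<close> and constrained by \<open>|\<psi>(w)| \<le> 1\<close>, the admissible set is
  compact by a discrete Poincare inequality, so \<open>J\<close> has a minimiser. Because a strictly
  admissible \<open>w\<close> exists (solve a discrete Poisson equation; here \<open>|mean \<phi>\<^sup>n| < 1\<close> is used) and
  \<open>F\<close> has infinite slope at \<open>\<plusminus>1\<close>, moving towards it would decrease \<open>J\<close> at the rate of
  \<open>s ln s\<close>; so the minimiser is interior and satisfies the Euler--Lagrange equation, which is
  the scheme. Uniqueness is a monotonicity argument.\<close>

subsection \<open>The mixing entropy\<close>

text \<open>Isabelle's \<open>ln\<close> satisfies \<open>ln 0 = 0\<close> and \<open>ln (-x) = ln x\<close>, so \<open>xlogx\<close> is
  continuous on all of \<open>\<real>\<close>.\<close>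
definition xlogx :: "real \<Rightarrow> real" where "xlogx y = y * ln y"

lemma isCont_xlogx: "isCont xlogx x"
proof (cases "x = 0")
  case True
  have "((\<lambda>y::real. y * ln y) \<longlongrightarrow> 0) (at_right 0)" by real_asymp
  moreover have "((\<lambda>y::real. y * ln (- y)) \<longlongrightarrow> 0) (at_left 0)" by real_asymp
  ultimately have "(xlogx \<longlongrightarrow> 0) (at 0)"
    by (simp add: filterlim_split_at xlogx_def[abs_def] ln_minus)
  then show ?thesis using True by (simp add: isCont_def xlogx_def)
next
  case False
  show ?thesis
  proof (cases "x > 0")
    case True
    then show ?thesis unfolding xlogx_def by (auto intro!: continuous_intros)
  next
    case negative: False
    have "isCont (\<lambda>y. - ((- y) * ln (- y))) x" using False negative by (auto intro!: continuous_intros)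
    moreover have "(\<lambda>y. - ((- y) * ln (- y))) = xlogx" by (auto simp: xlogx_def ln_minus fun_eq_iff)
    ultimately show ?thesis by simp
  qed
qed

lemma xlogx_ge: assumes "y \<ge> 0" shows "y - 1 \<le> xlogx y"
proof (cases "y = 0")
  case False
  with assms have y: "y > 0" by simp
  have "ln (1/y) \<le> 1/y - 1" using y by (intro ln_le_minus_one) simp
  then have "y * (- ln y) \<le> y * (1/y - 1)" using y by (intro mult_left_mono) (auto simp: ln_div)
  then show ?thesis using y by (simp add: xlogx_def algebra_simps)
qed (simp add: xlogx_def)

lemma xlogx_scale_le: assumes "y \<ge> 0" "0 \<le> t" "t \<le> 1" shows "xlogx (t * y) \<le> t * xlogx y"
proof (cases "t * y = 0")
  case False
  then have "ln (t * y) \<le> ln y" using assms by (auto simp: mult_le_cancel_right1)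
  then show ?thesis using assms unfolding xlogx_def by (simp add: mult_left_mono mult.assoc)
qed (use assms in \<open>auto simp: xlogx_def\<close>)

lemma convex_on_xlogx: "convex_on {0..} xlogx"
proof (rule convex_onI)
  show "convex {0::real..}" by simp
next
  fix t x y :: real assume t: "0 < t" "t < 1" and xy: "x \<in> {0..}" "y \<in> {0..}"
  have convex_pos: "convex_on {0<..} xlogx"
  proof (rule convex_on_realI[where f' = "\<lambda>x. ln x + 1"])
    fix x assume "x \<in> {0::real<..}"
    then show "(xlogx has_real_derivative ln x + 1) (at x)"
      unfolding xlogx_def[abs_def] by (auto intro!: derivative_eq_intros)
  qed auto
  show "xlogx ((1 - t) *\<^sub>R x + t *\<^sub>R y) \<le> (1 - t) * xlogx x + t * xlogx y"
  proof (cases "x = 0 \<or> y = 0")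
    case False
    then show ?thesis using xy t by (intro convex_onD[OF convex_pos]) auto
  next
    case True
    then show ?thesis
      using xlogx_scale_le[of y t] xlogx_scale_le[of x "1 - t"] xy t by (auto simp: xlogx_def)
  qed
qed

definition mix_entropy :: "real \<Rightarrow> real" where
  "mix_entropy x = xlogx (1 + x) + xlogx (1 - x)"

definition mix_potential :: "real \<Rightarrow> real" where
  "mix_potential x = ln (1 + x) - ln (1 - x)"

lemma isCont_mix_entropy: "isCont mix_entropy x"
  unfolding mix_entropy_def[abs_def]
  by (intro continuous_intros continuous_at_compose[OF _ isCont_xlogx, unfolded o_def])

lemma mix_entropy_nonneg: assumes "\<bar>x\<bar> \<le> 1" shows "0 \<le> mix_entropy x"
proof -
  have "x \<le> xlogx (1 + x)" "- x \<le> xlogx (1 - x)" using xlogx_ge[of "1 + x"] xlogx_ge[of "1 - x"] assms by auto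
  then show ?thesis unfolding mix_entropy_def by linarith
qed

lemma mix_entropy_convex:
  assumes "\<bar>x\<bar> \<le> 1" "\<bar>y\<bar> \<le> 1" "0 \<le> t" "t \<le> 1"
  shows "mix_entropy ((1 - t) * x + t * y) \<le> (1 - t) * mix_entropy x + t * mix_entropy y"
proof -
  have "xlogx ((1 - t) * (1 + x) + t * (1 + y)) \<le> (1 - t) * xlogx (1 + x) + t * xlogx (1 + y)"
       "xlogx ((1 - t) * (1 - x) + t * (1 - y)) \<le> (1 - t) * xlogx (1 - x) + t * xlogx (1 - y)"
    using convex_onD[OF convex_on_xlogx, of t "1 + x" "1 + y"]
      convex_onD[OF convex_on_xlogx, of t "1 - x" "1 - y"] assms by auto
  moreover have "(1 - t) * (1 + x) + t * (1 + y) = 1 + ((1 - t) * x + t * y)"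
    "(1 - t) * (1 - x) + t * (1 - y) = 1 - ((1 - t) * x + t * y)"
    by (simp_all add: algebra_simps)
  ultimately show ?thesis unfolding mix_entropy_def by (simp add: algebra_simps)
qed

text \<open>Leaving \<open>\<plusminus>1\<close> by \<open>s\<close> changes \<open>F\<close> by at most \<open>s ln s\<close>, whose slope at \<open>s = 0\<close> is \<open>-\<infinity>\<close>.\<close>
lemma mix_entropy_from_boundary:
  assumes "\<bar>x\<bar> = 1" "\<bar>y\<bar> \<le> 1" "0 \<le> t" "t \<le> 1"
  shows "mix_entropy (x + t * (y - x)) - mix_entropy x \<le> xlogx (t * \<bar>y - x\<bar>)"
proof -
  define s where "s = t * \<bar>y - x\<bar>"
  have s: "0 \<le> s" "s \<le> 2"
    using assms mult_mono[of t 1 "\<bar>y - x\<bar>" 2] unfolding s_def by auto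
  have "xlogx (2 - s) \<le> 2 * ln 2"
  proof (cases "s = 2")
    case False
    then have "(2 - s) * ln (2 - s) \<le> (2 - s) * ln 2" using s by (intro mult_left_mono) auto
    moreover have "(2 - s) * ln 2 \<le> 2 * ln 2" using s ln_ge_zero[of "2::real"] by simp
    ultimately show ?thesis unfolding xlogx_def by linarith
  qed (simp add: xlogx_def)
  moreover have "mix_entropy (x + t * (y - x)) = xlogx s + xlogx (2 - s)" "mix_entropy x = 2 * ln 2"
  proof -
    consider "x = 1" | "x = -1" using assms(1) by linarith
    then show "mix_entropy (x + t * (y - x)) = xlogx s + xlogx (2 - s)"
      using assms(2) by cases (auto simp: s_def mix_entropy_def algebra_simps abs_if)
    show "mix_entropy x = 2 * ln 2"
      using assms(1) by (auto simp: mix_entropy_def xlogx_def abs_if split: if_splits)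
  qed
  ultimately show ?thesis unfolding s_def by linarith
qed

lemma has_real_derivative_mix_entropy:
  assumes "\<bar>x\<bar> < 1" shows "(mix_entropy has_real_derivative mix_potential x) (at x)"
proof -
  have "1 + x > 0" "1 - x > 0" using assms by auto
  then have "((\<lambda>x. (1 + x) * ln (1 + x) + (1 - x) * ln (1 - x)) has_real_derivative
      (ln (1 + x) + 1) + (- ln (1 - x) - 1)) (at x)"
    by (auto intro!: derivative_eq_intros)
  then show ?thesis unfolding mix_entropy_def[abs_def] xlogx_def mix_potential_def by simp
qed

lemma has_real_derivative_mix_entropy_line:
  assumes "\<bar>x\<bar> < 1"
  shows "((\<lambda>t. mix_entropy (x + t * c)) has_real_derivative mix_potential x * c) (at 0)"
proof -
  have inner: "((\<lambda>t. x + t * c) has_real_derivative c) (at 0)" by (auto intro!: derivative_eq_intros)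
  have "(mix_entropy has_real_derivative mix_potential x) (at ((\<lambda>t. x + t * c) 0))"
    using has_real_derivative_mix_entropy[OF assms] by simp
  from DERIV_chain2[OF this inner] show ?thesis by simp
qed

lemma mix_potential_less: assumes "\<bar>x\<bar> < 1" "\<bar>y\<bar> < 1" "x < y" shows "mix_potential x < mix_potential y"
proof -
  have "ln (1 + x) < ln (1 + y)" "ln (1 - y) < ln (1 - x)" using assms by auto
  then show ?thesis unfolding mix_potential_def by simp
qed

lemma mix_potential_monotone:
  assumes "\<bar>x\<bar> < 1" "\<bar>y\<bar> < 1"
  shows "0 \<le> (x - y) * (mix_potential x - mix_potential y)"
    and "(x - y) * (mix_potential x - mix_potential y) = 0 \<Longrightarrow> x = y"
  using mix_potential_less[OF assms] mix_potential_less[OF assms(2,1)]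
  by (cases x y rule: linorder_cases; auto simp: mult_nonpos_nonpos)+

subsection \<open>Sums over the periodic cell\<close>

definition gsum :: "nat \<Rightarrow> gridfun \<Rightarrow> real" where
  "gsum N f = (\<Sum>i\<in>{1..int N}. \<Sum>j\<in>{1..int N}. \<Sum>k\<in>{1..int N}. f i j k)"

definition cube :: "nat \<Rightarrow> (int \<times> int \<times> int) set" where
  "cube N = {1..int N} \<times> {1..int N} \<times> {1..int N}"

lemma finite_cube: "finite (cube N)" and cube_nonempty: "N > 0 \<Longrightarrow> cube N \<noteq> {}"
  unfolding cube_def by auto

lemma gsum_add: "gsum N (\<lambda>i j k. f i j k + g i j k) = gsum N f + gsum N g"
  by (simp add: gsum_def sum.distrib)

lemma gsum_diff: "gsum N (\<lambda>i j k. f i j k - g i j k) = gsum N f - gsum N g"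
  by (simp add: gsum_def sum_subtractf)

lemma gsum_cmult: "gsum N (\<lambda>i j k. c * f i j k) = c * gsum N f"
  by (simp add: gsum_def sum_distrib_left)

lemma gsum_const: "gsum N (\<lambda>i j k. c) = real N ^ 3 * c"
  by (simp add: gsum_def power3_eq_cube)

lemma gsum_mono:
  "(\<And>i j k. (i, j, k) \<in> cube N \<Longrightarrow> f i j k \<le> g i j k) \<Longrightarrow> gsum N f \<le> gsum N g"
  unfolding gsum_def cube_def by (intro sum_mono) auto

lemma gsum_cong:
  "(\<And>i j k. (i, j, k) \<in> cube N \<Longrightarrow> f i j k = g i j k) \<Longrightarrow> gsum N f = gsum N g"
  unfolding gsum_def cube_def by (intro sum.cong) auto

lemma gsum_nonneg: "(\<And>i j k. (i, j, k) \<in> cube N \<Longrightarrow> 0 \<le> f i j k) \<Longrightarrow> 0 \<le> gsum N f"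
  using gsum_mono[of N "\<lambda>_ _ _. 0" f] by (simp add: gsum_const)

lemma member_le_gsum:
  assumes "\<And>i j k. (i, j, k) \<in> cube N \<Longrightarrow> 0 \<le> f i j k" and "(a, b, c) \<in> cube N"
  shows "f a b c \<le> gsum N f"
proof -
  have "f a b c \<le> (\<Sum>k\<in>{1..int N}. f a b k)"
    using assms by (intro member_le_sum) (auto simp: cube_def)
  also have "\<dots> \<le> (\<Sum>j\<in>{1..int N}. \<Sum>k\<in>{1..int N}. f a j k)"
    using assms by (intro member_le_sum[where f = "\<lambda>j. \<Sum>k\<in>{1..int N}. f a j k"] sum_nonneg)
      (auto simp: cube_def)
  also have "\<dots> \<le> gsum N f" unfolding gsum_def
    using assms by (intro member_le_sum[where f = "\<lambda>i. \<Sum>j\<in>{1..int N}. \<Sum>k\<in>{1..int N}. f i j k"]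
      sum_nonneg) (auto simp: cube_def)
  finally show ?thesis .
qed

lemma gsum_nonpos_imp_zero:
  assumes "\<And>i j k. (i, j, k) \<in> cube N \<Longrightarrow> 0 \<le> f i j k" "gsum N f \<le> 0" "(a, b, c) \<in> cube N"
  shows "f a b c = 0"
  using member_le_gsum[where f = f, OF assms(1,3)] assms(1)[OF assms(3)] assms(2) by linarith

lemma sum_int_telescope: "(\<Sum>i\<in>{1..int n}. (f (i + 1) - f i :: real)) = f (int n + 1) - f 1"
proof (induction n)
  case (Suc n)
  have "{1..int (Suc n)} = insert (int n + 1) {1..int n}" by auto
  then show ?case using Suc by simp
qed simp

lemma sum_shift_periodic:
  assumes "\<And>i. f (i + int N) = (f i :: real)"
  shows "(\<Sum>i\<in>{1..int N}. f (i + 1)) = (\<Sum>i\<in>{1..int N}. f i)"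
  using sum_int_telescope[of f N] assms[of 1] by (simp add: sum_subtractf add.commute)

lemma gsum_shift:
  shows "(\<And>i j k. f (i + int N) j k = f i j k) \<Longrightarrow> gsum N (\<lambda>i j k. f (i + 1) j k) = gsum N f"
    and "(\<And>i j k. f i (j + int N) k = f i j k) \<Longrightarrow> gsum N (\<lambda>i j k. f i (j + 1) k) = gsum N f"
    and "(\<And>i j k. f i j (k + int N) = f i j k) \<Longrightarrow> gsum N (\<lambda>i j k. f i j (k + 1)) = gsum N f"
  unfolding gsum_def
  by (intro sum_shift_periodic[where f = "\<lambda>i. \<Sum>j\<in>{1..int N}. \<Sum>k\<in>{1..int N}. f i j k"]; simp)
    (intro sum.cong refl sum_shift_periodic; simp)+

subsection \<open>Periodic grid functions\<close>

lemma perD: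
  assumes "per N f"
  shows "f (i + int N) j k = f i j k" "f i (j + int N) k = f i j k" "f i j (k + int N) = f i j k"
  using assms unfolding per_def by auto

lemma perD_offset:
  assumes "per N f"
  shows "f (i + int N + c) j k = f (i + c) j k" "f i (j + int N + c) k = f i (j + c) k"
    "f i j (k + int N + c) = f i j (k + c)"
    "f (i + int N - c) j k = f (i - c) j k" "f i (j + int N - c) k = f i (j - c) k"
    "f i j (k + int N - c) = f i j (k - c)"
  using perD[OF assms, of "i + c"] perD[OF assms, of _ "j + c"] perD[OF assms, of _ _ "k + c"]
    perD[OF assms, of "i - c"] perD[OF assms, of _ "j - c"] perD[OF assms, of _ _ "k - c"]
  by (simp_all add: algebra_simps)

lemma per_const: "per N (\<lambda>i j k. c)"
  unfolding per_def by simp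

lemma per_comb: "per N f \<Longrightarrow> per N g \<Longrightarrow> per N (\<lambda>i j k. F (f i j k) (g i j k))"
  unfolding per_def by simp

lemma per_lap: assumes "per N u" shows "per N (lap h u)"
  unfolding per_def[of N "lap h u"] lap_def using perD[OF assms] perD_offset[OF assms, where c=1] by simp

definition wrap :: "nat \<Rightarrow> int \<Rightarrow> int" where
  "wrap N i = (i - 1) mod int N + 1"

lemma wrap_in_range: "N > 0 \<Longrightarrow> wrap N i \<in> {1..int N}"
proof -
  assume "N > 0"
  then have "0 \<le> (i - 1) mod int N" "(i - 1) mod int N < int N" by simp_all
  then show ?thesis unfolding wrap_def by simp
qed

lemma wrap_id: "i \<in> {1..int N} \<Longrightarrow> wrap N i = i"
  unfolding wrap_def by auto

lemma wrap_add_period: "wrap N (i + int N) = wrap N i"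
  unfolding wrap_def by (simp add: diff_add_eq[symmetric])

lemma periodic_eq_wrap:
  assumes "\<And>i. f (i + int N) = (f i :: real)" shows "f i = f (wrap N i)"
proof -
  have shift: "f (i + int N * m) = f i" for i m
  proof (induction m rule: int_induct[where k = 0])
    case (step1 m)
    then show ?case using assms[of "i + int N * m"] by (simp add: algebra_simps)
  next
    case (step2 m)
    then show ?case using assms[of "i + int N * (m - 1)"] by (simp add: algebra_simps)
  qed simp
  have "i = wrap N i + int N * ((i - 1) div int N)"
    unfolding wrap_def using mod_mult_div_eq[of "i - 1" "int N"] by linarith
  then show ?thesis using shift[of "wrap N i" "(i - 1) div int N"] by simp
qed

lemma per_wrap: assumes "per N f" shows "f i j k = f (wrap N i) (wrap N j) (wrap N k)"
  using periodic_eq_wrap[where f="\<lambda>i. f i j k" and i=i and N=N] periodic_eq_wrap[where f="\<lambda>j. f (wrap N i) j k" and i=j and N=N]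
    periodic_eq_wrap[where f="\<lambda>k. f (wrap N i) (wrap N j) k" and i=k and N=N] perD[OF assms]
  by simp

lemma per_eqI:
  assumes "N > 0" "per N f" "per N g" "\<And>i j k. (i, j, k) \<in> cube N \<Longrightarrow> f i j k = g i j k"
  shows "f = g"
proof (intro ext)
  fix i j k
  show "f i j k = g i j k"
    using per_wrap[OF assms(2), of i j k] per_wrap[OF assms(3), of i j k]
      assms(4)[of "wrap N i" "wrap N j" "wrap N k"] wrap_in_range[OF assms(1)]
    by (simp add: cube_def)
qed

definition delta :: "nat \<Rightarrow> int \<Rightarrow> int \<Rightarrow> int \<Rightarrow> gridfun" where
  "delta N a b c i j k = (if wrap N i = a \<and> wrap N j = b \<and> wrap N k = c then 1 else 0)"

lemma per_delta: "per N (delta N a b c)"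
  unfolding per_def delta_def by (simp add: wrap_add_period)

lemma delta_on_cube: "(i, j, k) \<in> cube N \<Longrightarrow> delta N a b c i j k = (if (i, j, k) = (a, b, c) then 1 else 0)"
  unfolding delta_def cube_def by (auto simp: wrap_id)

lemma gsum_mult_delta:
  assumes "(a, b, c) \<in> cube N"
  shows "gsum N (\<lambda>i j k. f i j k * delta N a b c i j k) = f a b c"
proof -
  have "gsum N (\<lambda>i j k. f i j k * delta N a b c i j k)
      = gsum N (\<lambda>i j k. if k = c then if j = b then if i = a then f a b c else 0 else 0 else 0)"
    by (rule gsum_cong) (auto simp: delta_on_cube)
  also have "\<dots> = f a b c"
    using assms by (simp add: gsum_def cube_def sum.delta)
  finally show ?thesis .
qed

lemma abs_delta_le: "\<bar>delta N a b c i j k\<bar> \<le> 1"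
  unfolding delta_def by auto

subsection \<open>The discrete Dirichlet form\<close>

definition fdiff1 :: "gridfun \<Rightarrow> gridfun" where "fdiff1 u i j k = u (i + 1) j k - u i j k"
definition fdiff2 :: "gridfun \<Rightarrow> gridfun" where "fdiff2 u i j k = u i (j + 1) k - u i j k"
definition fdiff3 :: "gridfun \<Rightarrow> gridfun" where "fdiff3 u i j k = u i j (k + 1) - u i j k"

text \<open>In the notation of the paper, \<open>dirichlet N u v = h\<^sup>-\<^sup>1 \<langle>\<nabla>\<^sub>h u, \<nabla>\<^sub>h v\<rangle>\<close>.\<close>
definition dirichlet :: "nat \<Rightarrow> gridfun \<Rightarrow> gridfun \<Rightarrow> real" where
  "dirichlet N u v = gsum N (\<lambda>i j k. fdiff1 u i j k * fdiff1 v i j k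
     + fdiff2 u i j k * fdiff2 v i j k + fdiff3 u i j k * fdiff3 v i j k)"

lemma dirichlet_sym: "dirichlet N u v = dirichlet N v u"
  unfolding dirichlet_def by (simp add: mult.commute)

lemma dirichlet_nonneg: "0 \<le> dirichlet N u u"
  unfolding dirichlet_def by (intro gsum_nonneg) auto

lemma dirichlet_add_smult:
  "dirichlet N (\<lambda>i j k. u i j k + t * v i j k) (\<lambda>i j k. u i j k + t * v i j k)
     = dirichlet N u u + 2 * t * dirichlet N u v + t\<^sup>2 * dirichlet N v v"
proof -
  have "dirichlet N (\<lambda>i j k. u i j k + t * v i j k) (\<lambda>i j k. u i j k + t * v i j k) =
    gsum N (\<lambda>i j k. (fdiff1 u i j k * fdiff1 u i j k + fdiff2 u i j k * fdiff2 u i j k + fdiff3 u i j k * fdiff3 u i j k)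
       + (2 * t) * (fdiff1 u i j k * fdiff1 v i j k + fdiff2 u i j k * fdiff2 v i j k + fdiff3 u i j k * fdiff3 v i j k)
       + t\<^sup>2 * (fdiff1 v i j k * fdiff1 v i j k + fdiff2 v i j k * fdiff2 v i j k + fdiff3 v i j k * fdiff3 v i j k))"
    unfolding dirichlet_def
    by (rule gsum_cong) (simp add: fdiff1_def fdiff2_def fdiff3_def power2_eq_square algebra_simps)
  then show ?thesis unfolding gsum_add gsum_cmult dirichlet_def .
qed

lemma gsum_lap_mult:
  assumes u: "per N u" and v: "per N v"
  shows "gsum N (\<lambda>i j k. lap h u i j k * v i j k) = - dirichlet N u v / h\<^sup>2"
proof -
  note pu = perD[OF u] perD_offset[OF u, where c = 1] and pv = perD[OF v]
  have back1: "gsum N (\<lambda>i j k. fdiff1 u (i - 1) j k * v i j k) = gsum N (\<lambda>i j k. fdiff1 u i j k * v (i + 1) j k)"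
    using gsum_shift(1)[where N=N and f="\<lambda>i j k. fdiff1 u (i - 1) j k * v i j k"] pu pv
    by (simp add: fdiff1_def algebra_simps)
  have back2: "gsum N (\<lambda>i j k. fdiff2 u i (j - 1) k * v i j k) = gsum N (\<lambda>i j k. fdiff2 u i j k * v i (j + 1) k)"
    using gsum_shift(2)[where N=N and f="\<lambda>i j k. fdiff2 u i (j - 1) k * v i j k"] pu pv
    by (simp add: fdiff2_def algebra_simps)
  have back3: "gsum N (\<lambda>i j k. fdiff3 u i j (k - 1) * v i j k) = gsum N (\<lambda>i j k. fdiff3 u i j k * v i j (k + 1))"
    using gsum_shift(3)[where N=N and f="\<lambda>i j k. fdiff3 u i j (k - 1) * v i j k"] pu pv
    by (simp add: fdiff3_def algebra_simps)
  have pointwise: "lap h u i j k * v i j k = (1 / h\<^sup>2) * ((fdiff1 u i j k * v i j k - fdiff1 u (i - 1) j k * v i j k)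
     + (fdiff2 u i j k * v i j k - fdiff2 u i (j - 1) k * v i j k)
     + (fdiff3 u i j k * v i j k - fdiff3 u i j (k - 1) * v i j k))" for i j k
    by (cases "h = 0") (simp_all add: lap_def fdiff1_def fdiff2_def fdiff3_def field_simps)
  have "gsum N (\<lambda>i j k. lap h u i j k * v i j k) = (1 / h\<^sup>2) *
       ((gsum N (\<lambda>i j k. fdiff1 u i j k * v i j k) - gsum N (\<lambda>i j k. fdiff1 u (i - 1) j k * v i j k))
     + (gsum N (\<lambda>i j k. fdiff2 u i j k * v i j k) - gsum N (\<lambda>i j k. fdiff2 u i (j - 1) k * v i j k))
     + (gsum N (\<lambda>i j k. fdiff3 u i j k * v i j k) - gsum N (\<lambda>i j k. fdiff3 u i j (k - 1) * v i j k)))"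
    unfolding pointwise gsum_cmult[symmetric] gsum_add[symmetric] gsum_diff[symmetric] ..
  also have "\<dots> = (1 / h\<^sup>2) * (- dirichlet N u v)"
    unfolding back1 back2 back3 dirichlet_def gsum_add[symmetric] gsum_diff[symmetric]
    by (rule arg_cong[where f = "\<lambda>x. _ * x"], simp add: gsum_def sum_negf[symmetric], intro sum.cong refl)
      (simp add: fdiff1_def fdiff2_def fdiff3_def algebra_simps)
  finally show ?thesis by simp
qed

lemma gsum_lap_mult_sym:
  assumes "per N u" "per N v"
  shows "gsum N (\<lambda>i j k. lap h u i j k * v i j k) = gsum N (\<lambda>i j k. u i j k * lap h v i j k)"
  using gsum_lap_mult[OF assms, of h] gsum_lap_mult[OF assms(2,1), of h] dirichlet_sym[of N u v]
  by (simp add: mult.commute)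

lemma gsum_lap: assumes "per N u" shows "gsum N (lap h u) = 0"
  using gsum_lap_mult[OF assms per_const, of h 1]
  by (simp add: dirichlet_def fdiff1_def fdiff2_def fdiff3_def gsum_def)

lemma lap_add_smult: "lap h (\<lambda>i j k. u i j k + t * v i j k) i j k = lap h u i j k + t * lap h v i j k"
  by (simp add: lap_def divide_inverse algebra_simps)

lemma lap_diff: "lap h (\<lambda>i j k. u i j k - v i j k) i j k = lap h u i j k - lap h v i j k"
  by (simp add: lap_def divide_inverse algebra_simps)

lemma abs_lap_le:
  assumes "\<And>i j k. \<bar>v i j k\<bar> \<le> 1"
  shows "\<bar>lap h v i j k\<bar> \<le> 12 / h\<^sup>2"
proof -
  define X where "X = (v (i + 1) j k - 2 * v i j k + v (i - 1) j k)
     + (v i (j + 1) k - 2 * v i j k + v i (j - 1) k) + (v i j (k + 1) - 2 * v i j k + v i j (k - 1))"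
  have "lap h v i j k = X / h\<^sup>2" by (simp only: lap_def X_def add_divide_distrib)
  moreover have "\<bar>X\<bar> \<le> 12" unfolding X_def
    using assms[of "i + 1" j k] assms[of i j k] assms[of "i - 1" j k] assms[of i "j + 1" k]
      assms[of i "j - 1" k] assms[of i j "k + 1"] assms[of i j "k - 1"] by (simp add: abs_le_iff)
  ultimately show ?thesis by (simp add: abs_divide divide_right_mono)
qed

lemma zero_if_gsum_zero:
  assumes "N > 0" "per N g" "gsum N g = 0"
    and "\<And>a b c. (a, b, c) \<in> cube N \<Longrightarrow> (a, b, c) \<noteq> (1, 1, 1) \<Longrightarrow> g a b c = 0"
  shows "g = (\<lambda>i j k. 0)"
proof -
  have origin: "(1, 1, 1) \<in> cube N" using assms(1) by (simp add: cube_def)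
  have "gsum N g = gsum N (\<lambda>i j k. g 1 1 1 * delta N 1 1 1 i j k)"
    using assms(4) by (intro gsum_cong) (auto simp: delta_on_cube)
  then have "g 1 1 1 = 0" using gsum_mult_delta[OF origin, of "\<lambda>_ _ _. g 1 1 1"] assms(3) by simp
  then show ?thesis using assms(4) by (intro per_eqI[OF assms(1,2) per_const]) force
qed

lemma abs_fdiff_le_sqrt_dirichlet:
  assumes "N > 0" "per N w"
  shows "\<bar>fdiff1 w i j k\<bar> \<le> sqrt (dirichlet N w w)" "\<bar>fdiff2 w i j k\<bar> \<le> sqrt (dirichlet N w w)"
    "\<bar>fdiff3 w i j k\<bar> \<le> sqrt (dirichlet N w w)"
proof -
  let ?p = "(wrap N i, wrap N j, wrap N k)"
  have p: "?p \<in> cube N" using wrap_in_range[OF assms(1)] by (simp add: cube_def)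
  have "per N (fdiff1 w)" "per N (fdiff2 w)" "per N (fdiff3 w)"
    unfolding per_def fdiff1_def fdiff2_def fdiff3_def
    using perD[OF assms(2)] perD_offset[OF assms(2), where c=1] by simp_all
  then have wrapped: "fdiff1 w i j k = fdiff1 w (wrap N i) (wrap N j) (wrap N k)"
    "fdiff2 w i j k = fdiff2 w (wrap N i) (wrap N j) (wrap N k)"
    "fdiff3 w i j k = fdiff3 w (wrap N i) (wrap N j) (wrap N k)"
    using per_wrap by blast+
  have "(fdiff1 w i j k)\<^sup>2 + (fdiff2 w i j k)\<^sup>2 + (fdiff3 w i j k)\<^sup>2 \<le> dirichlet N w w"
    unfolding dirichlet_def wrapped power2_eq_square
    using member_le_gsum[OF _ p, of "\<lambda>i j k. fdiff1 w i j k * fdiff1 w i j k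
       + fdiff2 w i j k * fdiff2 w i j k + fdiff3 w i j k * fdiff3 w i j k"] by simp
  then have "(fdiff1 w i j k)\<^sup>2 \<le> dirichlet N w w" "(fdiff2 w i j k)\<^sup>2 \<le> dirichlet N w w"
    "(fdiff3 w i j k)\<^sup>2 \<le> dirichlet N w w"
    using zero_le_power2[of "fdiff1 w i j k"] zero_le_power2[of "fdiff2 w i j k"]
      zero_le_power2[of "fdiff3 w i j k"] by linarith+
  then show "\<bar>fdiff1 w i j k\<bar> \<le> sqrt (dirichlet N w w)" "\<bar>fdiff2 w i j k\<bar> \<le> sqrt (dirichlet N w w)"
    "\<bar>fdiff3 w i j k\<bar> \<le> sqrt (dirichlet N w w)"
    by (simp_all add: real_le_rsqrt)
qed

lemma abs_increment_le:
  shows "(\<And>i j k. \<bar>fdiff1 w i j k\<bar> \<le> m) \<Longrightarrow> \<bar>w (i + int t) j k - w i j k\<bar> \<le> real t * m"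
    and "(\<And>i j k. \<bar>fdiff2 w i j k\<bar> \<le> m) \<Longrightarrow> \<bar>w i (j + int t) k - w i j k\<bar> \<le> real t * m"
    and "(\<And>i j k. \<bar>fdiff3 w i j k\<bar> \<le> m) \<Longrightarrow> \<bar>w i j (k + int t) - w i j k\<bar> \<le> real t * m"
proof (induction t)
  case (Suc t)
  { case 1 show ?case using Suc.IH(1)[OF 1] 1[of "i + int t" j k] by (simp add: fdiff1_def algebra_simps) }
  { case 2 show ?case using Suc.IH(2)[OF 2] 2[of i "j + int t" k] by (simp add: fdiff2_def algebra_simps) }
  { case 3 show ?case using Suc.IH(3)[OF 3] 3[of i j "k + int t"] by (simp add: fdiff3_def algebra_simps) }
qed simp_all

lemma discrete_poincare:
  assumes "N > 0" "per N w" "w 1 1 1 = 0" "(a, b, c) \<in> cube N"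
  shows "\<bar>w a b c\<bar> \<le> 3 * real N * sqrt (dirichlet N w w)"
proof -
  let ?m = "sqrt (dirichlet N w w)"
  have steps: "t \<le> N \<Longrightarrow> real t * ?m \<le> real N * ?m" for t
    using dirichlet_nonneg[of N w] by (intro mult_right_mono) auto
  note incr = abs_increment_le(1)[OF abs_fdiff_le_sqrt_dirichlet(1)[OF assms(1,2)]]
    abs_increment_le(2)[OF abs_fdiff_le_sqrt_dirichlet(2)[OF assms(1,2)]]
    abs_increment_le(3)[OF abs_fdiff_le_sqrt_dirichlet(3)[OF assms(1,2)]]
  have "a = 1 + int (nat (a - 1))" "b = 1 + int (nat (b - 1))" "c = 1 + int (nat (c - 1))"
    "nat (a - 1) \<le> N" "nat (b - 1) \<le> N" "nat (c - 1) \<le> N"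
    using assms(4) by (auto simp: cube_def)
  then have "\<bar>w a b c - w 1 b c\<bar> \<le> real N * ?m" "\<bar>w 1 b c - w 1 1 c\<bar> \<le> real N * ?m"
    "\<bar>w 1 1 c - w 1 1 1\<bar> \<le> real N * ?m"
    using incr(1)[of 1 "nat (a - 1)" b c] incr(2)[of 1 1 "nat (b - 1)" c] incr(3)[of 1 1 1 "nat (c - 1)"]
      steps[of "nat (a - 1)"] steps[of "nat (b - 1)"] steps[of "nat (c - 1)"] by auto
  then show ?thesis using assms(3) by linarith
qed

subsection \<open>Minimisation over periodic grid functions\<close>

text \<open>Periodic grid functions are identified with their values on the cell, a point of a
  finite product of copies of \<open>\<real>\<close>, where boxes are compact.\<close>
definition periodize :: "nat \<Rightarrow> (int \<times> int \<times> int \<Rightarrow> real) \<Rightarrow> gridfun" where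
  "periodize N x i j k = x (wrap N i, wrap N j, wrap N k)"

definition cell_values :: "nat \<Rightarrow> gridfun \<Rightarrow> int \<times> int \<times> int \<Rightarrow> real" where
  "cell_values N w = restrict (\<lambda>(i, j, k). w i j k) (cube N)"

lemma per_periodize: "per N (periodize N x)"
  unfolding per_def periodize_def by (simp add: wrap_add_period)

lemma periodize_cell_values: assumes "N > 0" "per N w" shows "periodize N (cell_values N w) = w"
  using per_wrap[OF assms(2)] wrap_in_range[OF assms(1)]
  by (auto simp: fun_eq_iff periodize_def cell_values_def cube_def)

lemma compact_cube_box: "compact (PiE (cube N) (\<lambda>_. {-R..R::real}))"
proof -
  have "PiE (cube N) (\<lambda>_. {-R..R}) = PiE UNIV (\<lambda>p. if p \<in> cube N then {-R..R} else {undefined})"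
    by (auto simp: PiE_iff extensional_def split: if_splits)
  moreover have "compactin (product_topology (\<lambda>_. euclidean) UNIV)
      (PiE UNIV (\<lambda>p. if p \<in> cube N then {-R..R::real} else {undefined}))"
    by (subst compactin_PiE) auto
  ultimately show ?thesis by (simp add: euclidean_product_topology)
qed

lemma cell_values_in_box:
  assumes "\<And>i j k. (i, j, k) \<in> cube N \<Longrightarrow> \<bar>w i j k\<bar> \<le> R"
  shows "cell_values N w \<in> PiE (cube N) (\<lambda>_. {-R..R})"
  unfolding cell_values_def by (auto simp: PiE_iff abs_le_iff dest!: assms)

lemma continuous_on_periodize [continuous_intros]: "continuous_on A (\<lambda>x. periodize N x i j k)"
  unfolding periodize_def by (rule continuous_on_subset[OF continuous_on_product_coordinates]) simp

lemma periodic_minimiser_exists: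
  fixes J :: "gridfun \<Rightarrow> real" and adm :: "gridfun \<Rightarrow> bool"
  assumes N: "N > 0"
    and closed: "closed {x. adm (periodize N x)}"
    and cont: "continuous_on (PiE (cube N) (\<lambda>_. {-R..R}) \<inter> {x. adm (periodize N x)}) (\<lambda>x. J (periodize N x))"
    and ws: "per N ws" "adm ws"
    and bounded: "\<And>w i j k. per N w \<Longrightarrow> adm w \<Longrightarrow> J w \<le> J ws \<Longrightarrow> (i, j, k) \<in> cube N \<Longrightarrow> \<bar>w i j k\<bar> \<le> R"
  obtains wm where "per N wm" "adm wm" "\<And>w. per N w \<Longrightarrow> adm w \<Longrightarrow> J wm \<le> J w"
proof -
  let ?K = "PiE (cube N) (\<lambda>_. {-R..R}) \<inter> {x. adm (periodize N x)}"
  have in_K: "cell_values N w \<in> ?K" if "per N w" "adm w" "J w \<le> J ws" for w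
    using cell_values_in_box[OF bounded[OF that]] periodize_cell_values[OF N that(1)] that(2) by auto
  have "compact ?K" using compact_cube_box closed by (rule compact_Int_closed)
  moreover have "?K \<noteq> {}" using in_K[OF ws order.refl] by auto
  ultimately obtain xm where xm: "xm \<in> ?K" "\<And>y. y \<in> ?K \<Longrightarrow> J (periodize N xm) \<le> J (periodize N y)"
    using continuous_attains_inf[OF _ _ cont] by auto
  show ?thesis
  proof (rule that[OF per_periodize])
    show "adm (periodize N xm)" using xm by auto
    fix w assume w: "per N w" "adm w"
    show "J (periodize N xm) \<le> J w"
    proof (cases "J w \<le> J ws")
      case True
      then show ?thesis using xm(2)[OF in_K[OF w True]] periodize_cell_values[OF N w(1)] by simp
    next
      case False
      then show ?thesis using xm(2)[OF in_K[OF ws order.refl]] periodize_cell_values[OF N ws(1)] by simp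
    qed
  qed
qed

definition grid_continuous_on :: "'a::topological_space set \<Rightarrow> ('a \<Rightarrow> gridfun) \<Rightarrow> bool" where
  "grid_continuous_on A U \<longleftrightarrow> (\<forall>i j k. continuous_on A (\<lambda>x. U x i j k))"

lemma grid_continuous_onD: "grid_continuous_on A U \<Longrightarrow> continuous_on A (\<lambda>x. U x i j k)"
  unfolding grid_continuous_on_def by blast

lemma continuous_on_gsum: "grid_continuous_on A U \<Longrightarrow> continuous_on A (\<lambda>x. gsum N (U x))"
  unfolding gsum_def by (intro continuous_on_sum grid_continuous_onD)

lemma continuous_on_dirichlet:
  "grid_continuous_on A U \<Longrightarrow> grid_continuous_on A V \<Longrightarrow> continuous_on A (\<lambda>x. dirichlet N (U x) (V x))"
  unfolding dirichlet_def
  by (intro continuous_on_gsum)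
    (auto simp: grid_continuous_on_def fdiff1_def fdiff2_def fdiff3_def intro!: continuous_intros)

lemma grid_continuous_on_periodize: "grid_continuous_on A (periodize N)"
  unfolding grid_continuous_on_def by (auto intro: continuous_on_periodize)

lemma grid_continuous_on_const: "grid_continuous_on A (\<lambda>x. f)"
  unfolding grid_continuous_on_def by auto

lemma grid_continuous_on_ops:
  assumes "grid_continuous_on A U" "grid_continuous_on A V"
  shows "grid_continuous_on A (\<lambda>x i j k. U x i j k + V x i j k)"
    "grid_continuous_on A (\<lambda>x i j k. U x i j k - V x i j k)"
    "grid_continuous_on A (\<lambda>x i j k. U x i j k * V x i j k)"
  using assms unfolding grid_continuous_on_def by (auto intro: continuous_intros)

lemma grid_continuous_on_cmult: "grid_continuous_on A U \<Longrightarrow> grid_continuous_on A (\<lambda>x i j k. c * U x i j k)"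
  unfolding grid_continuous_on_def by (auto intro: continuous_intros)

lemma grid_continuous_on_lap: "grid_continuous_on A U \<Longrightarrow> grid_continuous_on A (\<lambda>x. lap h (U x))"
  unfolding grid_continuous_on_def lap_def divide_inverse by (auto intro!: continuous_intros)

lemma grid_continuous_on_mix_entropy:
  "grid_continuous_on A U \<Longrightarrow> grid_continuous_on A (\<lambda>x i j k. mix_entropy (U x i j k))"
  unfolding grid_continuous_on_def
  by (auto intro!: continuous_on_compose2[OF continuous_at_imp_continuous_on[of UNIV mix_entropy]]
    isCont_mix_entropy)

subsection \<open>The discrete Poisson equation\<close>

lemma quadratic_nonneg_imp_linear_zero:
  fixes a b :: real
  assumes "\<And>t. 0 \<le> t * a + t\<^sup>2 * b"
  shows "a = 0"
proof (rule ccontr)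
  assume "a \<noteq> 0"
  define c where "c = \<bar>b\<bar> + 1"
  define t where "t = - a / (2 * c)"
  have c: "c > 0" "b \<le> c" unfolding c_def by auto
  have "t * a + t\<^sup>2 * b \<le> t * a + t\<^sup>2 * c" using c by (simp add: mult_left_mono)
  also have "\<dots> = - (a * a) / (4 * c)" unfolding t_def power2_eq_square using c by (simp add: divide_simps)
  also have "\<dots> < 0"
  proof -
    have "0 < a * a" using \<open>a \<noteq> 0\<close> by (metis not_real_square_gt_zero)
    then have "0 < a * a / (4 * c)" using c by (intro divide_pos_pos) auto
    then show ?thesis by simp
  qed
  finally show False using assms[of t] by linarith
qed

definition poisson_energy :: "nat \<Rightarrow> real \<Rightarrow> gridfun \<Rightarrow> gridfun \<Rightarrow> real" where
  "poisson_energy N h f u = dirichlet N u u / (2 * h\<^sup>2) + gsum N (\<lambda>i j k. f i j k * u i j k)"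

lemma poisson_energy_sublevel_bound:
  assumes N: "N > 0" and h: "h \<noteq> 0" and w: "per N w" "w 1 1 1 = 0"
    and below: "poisson_energy N h f w \<le> 0" and p: "(a, b, c) \<in> cube N"
  shows "\<bar>w a b c\<bar> \<le> 3 * real N * (6 * real N * h\<^sup>2 * gsum N (\<lambda>i j k. \<bar>f i j k\<bar>))"
proof -
  let ?m = "sqrt (dirichlet N w w)" and ?F = "gsum N (\<lambda>i j k. \<bar>f i j k\<bar>)"
  have poincare: "\<bar>w i j k\<bar> \<le> 3 * real N * ?m" if "(i, j, k) \<in> cube N" for i j k
    using discrete_poincare[OF N w(1,2) that] .
  have "dirichlet N w w / (2 * h\<^sup>2) \<le> gsum N (\<lambda>i j k. - (f i j k * w i j k))"
    using below by (simp add: poisson_energy_def gsum_def sum_negf)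
  also have "\<dots> \<le> gsum N (\<lambda>i j k. \<bar>f i j k\<bar> * (3 * real N * ?m))"
  proof (rule gsum_mono)
    fix i j k assume "(i, j, k) \<in> cube N"
    then have "\<bar>f i j k\<bar> * \<bar>w i j k\<bar> \<le> \<bar>f i j k\<bar> * (3 * real N * ?m)"
      using poincare by (intro mult_left_mono) auto
    moreover have "- (f i j k * w i j k) \<le> \<bar>f i j k\<bar> * \<bar>w i j k\<bar>"
      by (simp add: abs_mult[symmetric])
    ultimately show "- (f i j k * w i j k) \<le> \<bar>f i j k\<bar> * (3 * real N * ?m)" by linarith
  qed
  also have "\<dots> = ?F * (3 * real N * ?m)" unfolding gsum_def sum_distrib_right by simp
  finally have "dirichlet N w w \<le> ?F * (3 * real N * ?m) * (2 * h\<^sup>2)"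
    using h by (simp add: pos_divide_le_eq)
  moreover have "?m * ?m = dirichlet N w w" using dirichlet_nonneg[of N w] by simp
  ultimately have mm: "?m * ?m \<le> (6 * real N * h\<^sup>2 * ?F) * ?m" by (simp add: mult_ac)
  have "?m \<le> 6 * real N * h\<^sup>2 * ?F"
  proof (cases "?m = 0")
    case True
    then show ?thesis by (simp add: gsum_nonneg)
  next
    case False
    then have "?m > 0" using dirichlet_nonneg[of N w] by simp
    then show ?thesis using mult_right_le_imp_le[OF mm] by simp
  qed
  then have "3 * real N * ?m \<le> 3 * real N * (6 * real N * h\<^sup>2 * ?F)" by (intro mult_left_mono) auto
  then show ?thesis using poincare[OF p] by linarith
qed

lemma poisson_energy_perturb:
  "poisson_energy N h f (\<lambda>i j k. u i j k + t * d i j k) = poisson_energy N h f u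
     + t * (dirichlet N u d / h\<^sup>2 + gsum N (\<lambda>i j k. f i j k * d i j k)) + t\<^sup>2 * (dirichlet N d d / (2 * h\<^sup>2))"
proof -
  have "gsum N (\<lambda>i j k. f i j k * (u i j k + t * d i j k))
      = gsum N (\<lambda>i j k. f i j k * u i j k) + t * gsum N (\<lambda>i j k. f i j k * d i j k)"
    unfolding gsum_add[symmetric] gsum_cmult[symmetric] by (rule gsum_cong) (simp add: algebra_simps)
  then show ?thesis
    unfolding poisson_energy_def dirichlet_add_smult by (simp add: add_divide_distrib power2_eq_square algebra_simps)
qed

text \<open>Minimising \<open>poisson_energy\<close> under \<open>u(1,1,1) = 0\<close>; at the pinned point the equation
  is recovered from the zero sum.\<close>
lemma discrete_poisson:
  assumes N: "N > 0" and h: "h \<noteq> 0" and f: "per N f" "gsum N f = 0"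
  shows "\<exists>u. per N u \<and> lap h u = f"
proof -
  obtain u where u: "per N u" "u 1 1 1 = 0"
    and min: "\<And>w. per N w \<Longrightarrow> w 1 1 1 = 0 \<Longrightarrow> poisson_energy N h f u \<le> poisson_energy N h f w"
  proof (rule periodic_minimiser_exists[OF N, where J = "poisson_energy N h f" and ws = "\<lambda>i j k. 0"
        and adm = "\<lambda>w. w 1 1 1 = 0"])
    show "closed {x. periodize N x 1 1 1 = 0}" by (intro closed_Collect_eq continuous_intros)
    show "continuous_on A (\<lambda>x. poisson_energy N h f (periodize N x))" for A
      unfolding poisson_energy_def
      by (intro continuous_intros continuous_on_dirichlet continuous_on_gsum grid_continuous_on_periodize
          grid_continuous_on_ops grid_continuous_on_const) (simp add: h)
    show "\<bar>w i j k\<bar> \<le> 3 * real N * (6 * real N * h\<^sup>2 * gsum N (\<lambda>i j k. \<bar>f i j k\<bar>))"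
      if "per N w" "w 1 1 1 = 0" "poisson_energy N h f w \<le> poisson_energy N h f (\<lambda>i j k. 0)"
        "(i, j, k) \<in> cube N" for w i j k
      using poisson_energy_sublevel_bound[OF N h that(1,2) _ that(4)] that(3)
      by (simp add: poisson_energy_def dirichlet_def fdiff1_def fdiff2_def fdiff3_def gsum_def)
  qed (auto simp: per_const)
  have "lap h u a b c - f a b c = 0" if p: "(a, b, c) \<in> cube N" "(a, b, c) \<noteq> (1, 1, 1)" for a b c
  proof -
    let ?d = "delta N a b c"
    have "0 \<le> t * (f a b c - lap h u a b c) + t\<^sup>2 * (dirichlet N ?d ?d / (2 * h\<^sup>2))" for t
    proof -
      have "?d 1 1 1 = 0" using p N by (simp add: delta_on_cube cube_def)
      then have "poisson_energy N h f u \<le> poisson_energy N h f (\<lambda>i j k. u i j k + t * ?d i j k)"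
        by (intro min per_comb[OF u(1) per_delta]) (simp add: u(2))
      moreover have "dirichlet N u ?d / h\<^sup>2 = - lap h u a b c"
        using gsum_lap_mult[OF u(1) per_delta, of h] gsum_mult_delta[OF p(1), of "lap h u"] by simp
      ultimately show ?thesis
        using gsum_mult_delta[OF p(1), of f] unfolding poisson_energy_perturb by simp
    qed
    then have "f a b c - lap h u a b c = 0" by (rule quadratic_nonneg_imp_linear_zero)
    then show ?thesis by simp
  qed
  moreover have "gsum N (\<lambda>i j k. lap h u i j k - f i j k) = 0"
    using gsum_lap[OF u(1)] f(2) by (simp add: gsum_diff)
  ultimately have "(\<lambda>i j k. lap h u i j k - f i j k) = (\<lambda>i j k. 0)"
    by (intro zero_if_gsum_zero[OF N per_comb[OF per_lap[OF u(1)] f(1)]])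
  then show ?thesis using u(1) by (auto simp: fun_eq_iff)
qed

lemma gsum_mix_entropy_segment_le:
  assumes P: "\<And>i j k. (i, j, k) \<in> cube N \<Longrightarrow> \<bar>P i j k\<bar> \<le> 1"
    and Q: "\<And>i j k. (i, j, k) \<in> cube N \<Longrightarrow> \<bar>Q i j k\<bar> \<le> 1"
    and p: "(a, b, c) \<in> cube N" "\<bar>P a b c\<bar> = 1" and t: "0 \<le> t" "t \<le> 1"
  shows "gsum N (\<lambda>i j k. mix_entropy (P i j k + t * (Q i j k - P i j k))) - gsum N (\<lambda>i j k. mix_entropy (P i j k))
    \<le> t * (gsum N (\<lambda>i j k. mix_entropy (Q i j k) - mix_entropy (P i j k))
           - (mix_entropy (Q a b c) - mix_entropy (P a b c)))
       + xlogx (t * \<bar>Q a b c - P a b c\<bar>)"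
proof -
  let ?\<delta> = "delta N a b c"
  define bound where "bound i j k = t * (mix_entropy (Q i j k) - mix_entropy (P i j k))
    + (xlogx (t * \<bar>Q a b c - P a b c\<bar>) - t * (mix_entropy (Q a b c) - mix_entropy (P a b c))) * ?\<delta> i j k"
    for i j k
  have "gsum N (\<lambda>i j k. mix_entropy (P i j k + t * (Q i j k - P i j k)) - mix_entropy (P i j k)) \<le> gsum N bound"
  proof (rule gsum_mono)
    fix i j k assume ijk: "(i, j, k) \<in> cube N"
    show "mix_entropy (P i j k + t * (Q i j k - P i j k)) - mix_entropy (P i j k) \<le> bound i j k"
    proof (cases "(i, j, k) = (a, b, c)")
      case True
      then show ?thesis
        using mix_entropy_from_boundary[OF p(2) Q[OF p(1)] t] ijk by (simp add: bound_def delta_on_cube)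
    next
      case False
      then have "?\<delta> i j k = 0" using ijk by (simp add: delta_on_cube)
      moreover have "P i j k + t * (Q i j k - P i j k) = (1 - t) * P i j k + t * Q i j k" by (simp add: algebra_simps)
      ultimately show ?thesis
        using mix_entropy_convex[OF P[OF ijk] Q[OF ijk] t] by (simp add: bound_def algebra_simps)
    qed
  qed
  moreover have "gsum N bound = t * gsum N (\<lambda>i j k. mix_entropy (Q i j k) - mix_entropy (P i j k))
      + (xlogx (t * \<bar>Q a b c - P a b c\<bar>) - t * (mix_entropy (Q a b c) - mix_entropy (P a b c)))"
    unfolding bound_def gsum_add gsum_cmult using gsum_mult_delta[OF p(1), of "\<lambda>_ _ _. 1"] by simp
  ultimately show ?thesis by (simp add: gsum_diff algebra_simps)
qed

lemma xlogx_beats_linear: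
  assumes "b > 0" obtains t where "0 < t" "t \<le> 1" "t * C + xlogx (t * b) < 0"
proof -
  define E where "E = exp (- (\<bar>C\<bar> + 1) / b)"
  define t where "t = min 1 (E / b)"
  have t: "0 < t" "t \<le> 1" unfolding t_def E_def using assms by auto
  have "0 < t * b" "t * b \<le> E"
    using t assms mult_right_mono[of t "E / b" b] by (auto simp: t_def)
  then have "ln (t * b) \<le> - (\<bar>C\<bar> + 1) / b" unfolding E_def by (metis ln_exp ln_le_cancel_iff exp_gt_zero)
  then have "b * ln (t * b) \<le> - (\<bar>C\<bar> + 1)" using assms by (simp add: field_simps)
  then have "t * (b * ln (t * b)) \<le> t * (- (\<bar>C\<bar> + 1))" using t by (intro mult_left_mono) auto
  moreover have "t * C \<le> t * \<bar>C\<bar>" using t by (intro mult_left_mono) auto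
  moreover have "t * (- (\<bar>C\<bar> + 1)) = - (t * \<bar>C\<bar>) - t" by (simp add: algebra_simps)
  ultimately have "t * C + t * (b * ln (t * b)) < 0" using t by linarith
  then show ?thesis using that[OF t] by (simp add: xlogx_def mult.assoc)
qed

subsection \<open>The scheme and its energy\<close>

definition bdf2_eqs :: "real \<Rightarrow> real \<Rightarrow> real \<Rightarrow> real \<Rightarrow> real \<Rightarrow> gridfun \<Rightarrow> gridfun \<Rightarrow> gridfun \<Rightarrow> gridfun \<Rightarrow> bool"
  where "bdf2_eqs h \<epsilon> \<theta>0 dt A \<phi>n \<phi>nm1 \<phi> \<mu> \<longleftrightarrow>
    (\<forall>i j k. ((3/2) * \<phi> i j k - 2 * \<phi>n i j k + (1/2) * \<phi>nm1 i j k) / dt = lap h \<mu> i j k) \<and>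
    (\<forall>i j k. \<mu> i j k = ln (1 + \<phi> i j k) - ln (1 - \<phi> i j k)
               - \<theta>0 * (2 * \<phi>n i j k - \<phi>nm1 i j k)
               - A * dt * lap h (\<lambda>a b c. \<phi> a b c - \<phi>n a b c) i j k
               - \<epsilon>^2 * lap h \<phi> i j k)"

lemma bdf2_eqsD:
  assumes "bdf2_eqs h \<epsilon> \<theta>0 dt A \<phi>n \<phi>nm1 \<phi> \<mu>"
  shows "((3/2) * \<phi> i j k - 2 * \<phi>n i j k + (1/2) * \<phi>nm1 i j k) / dt = lap h \<mu> i j k"
    and "\<mu> i j k = mix_potential (\<phi> i j k) - \<theta>0 * (2 * \<phi>n i j k - \<phi>nm1 i j k)
      - A * dt * (lap h \<phi> i j k - lap h \<phi>n i j k) - \<epsilon>\<^sup>2 * lap h \<phi> i j k"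
  using assms unfolding bdf2_eqs_def mix_potential_def lap_diff by blast+

text \<open>Testing the difference of the two schemes against \<open>\<mu>\<^sub>1 - \<mu>\<^sub>2\<close> gives
  \<open>\<langle>\<phi>\<^sub>1 - \<phi>\<^sub>2, \<mu>\<^sub>1 - \<mu>\<^sub>2\<rangle> = (2\<Delta>t/3)\<langle>\<Delta>\<^sub>h(\<mu>\<^sub>1 - \<mu>\<^sub>2), \<mu>\<^sub>1 - \<mu>\<^sub>2\<rangle> \<le> 0\<close>, while expanding \<open>\<mu>\<^sub>1 - \<mu>\<^sub>2\<close>
  writes it as \<open>\<langle>\<phi>\<^sub>1 - \<phi>\<^sub>2, F'(\<phi>\<^sub>1) - F'(\<phi>\<^sub>2)\<rangle>\<close> plus a nonnegative gradient term; strict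
  monotonicity of \<open>F'\<close> then forces \<open>\<phi>\<^sub>1 = \<phi>\<^sub>2\<close>.\<close>
lemma bdf2_solution_unique:
  assumes N: "N > 0" and h: "h > 0" and dt: "dt > 0" and A: "A \<ge> 0"
    and per1: "per N \<phi>1" "per N \<mu>1" and per2: "per N \<phi>2" "per N \<mu>2"
    and eqs1: "bdf2_eqs h \<epsilon> \<theta>0 dt A \<phi>n \<phi>nm1 \<phi>1 \<mu>1" and eqs2: "bdf2_eqs h \<epsilon> \<theta>0 dt A \<phi>n \<phi>nm1 \<phi>2 \<mu>2"
    and bound1: "\<And>i j k. (i, j, k) \<in> cube N \<Longrightarrow> \<bar>\<phi>1 i j k\<bar> < 1"
    and bound2: "\<And>i j k. (i, j, k) \<in> cube N \<Longrightarrow> \<bar>\<phi>2 i j k\<bar> < 1"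
  shows "\<phi>1 = \<phi>2"
proof -
  define d where "d = (\<lambda>i j k. \<phi>1 i j k - \<phi>2 i j k)"
  define m where "m = (\<lambda>i j k. \<mu>1 i j k - \<mu>2 i j k)"
  define F where "F = (\<lambda>i j k. d i j k * (mix_potential (\<phi>1 i j k) - mix_potential (\<phi>2 i j k)))"
  have per_d: "per N d" unfolding d_def by (rule per_comb[OF per1(1) per2(1)])
  have per_m: "per N m" unfolding m_def by (rule per_comb[OF per1(2) per2(2)])
  have d_eq: "d i j k = (2 * dt / 3) * lap h m i j k" for i j k
    using bdf2_eqsD(1)[OF eqs1, of i j k] bdf2_eqsD(1)[OF eqs2, of i j k] dt
    unfolding d_def m_def lap_diff by (simp add: field_simps)
  have m_eq: "m i j k = (mix_potential (\<phi>1 i j k) - mix_potential (\<phi>2 i j k)) - (A * dt + \<epsilon>\<^sup>2) * lap h d i j k" for i j k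
    using bdf2_eqsD(2)[OF eqs1, of i j k] bdf2_eqsD(2)[OF eqs2, of i j k]
    unfolding m_def d_def lap_diff by (simp add: algebra_simps)
  have F_nonneg: "0 \<le> F i j k" if "(i, j, k) \<in> cube N" for i j k
    unfolding F_def d_def by (rule mix_potential_monotone(1)[OF bound1[OF that] bound2[OF that]])
  have "gsum N (\<lambda>i j k. d i j k * m i j k) = (2 * dt / 3) * gsum N (\<lambda>i j k. lap h m i j k * m i j k)"
    unfolding gsum_cmult[symmetric] by (rule gsum_cong) (simp add: d_eq)
  also have "\<dots> = - (2 * dt / 3) * dirichlet N m m / h\<^sup>2" using gsum_lap_mult[OF per_m per_m, of h] by simp
  also have "\<dots> \<le> 0" using dt dirichlet_nonneg[of N m] by simp
  finally have "gsum N (\<lambda>i j k. d i j k * m i j k) \<le> 0" .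
  moreover have "gsum N (\<lambda>i j k. d i j k * m i j k) = gsum N F + (A * dt + \<epsilon>\<^sup>2) * (dirichlet N d d / h\<^sup>2)"
  proof -
    have "gsum N (\<lambda>i j k. d i j k * m i j k) = gsum N F - (A * dt + \<epsilon>\<^sup>2) * gsum N (\<lambda>i j k. lap h d i j k * d i j k)"
      unfolding gsum_cmult[symmetric] gsum_diff[symmetric] F_def by (rule gsum_cong) (simp add: m_eq algebra_simps)
    then show ?thesis using gsum_lap_mult[OF per_d per_d, of h] by simp
  qed
  moreover have "0 \<le> (A * dt + \<epsilon>\<^sup>2) * (dirichlet N d d / h\<^sup>2)"
    using A dt by (simp add: dirichlet_nonneg)
  ultimately have "gsum N F \<le> 0" by linarith
  have "\<phi>1 i j k = \<phi>2 i j k" if "(i, j, k) \<in> cube N" for i j k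
    using gsum_nonpos_imp_zero[OF F_nonneg \<open>gsum N F \<le> 0\<close> that]
      mix_potential_monotone(2)[OF bound1[OF that] bound2[OF that]] unfolding F_def d_def by simp
  then show ?thesis by (rule per_eqI[OF N per1(1) per2(1)])
qed

locale bdf2_scheme =
  fixes N :: nat and h \<epsilon> \<theta>0 dt A :: real and \<phi>n \<phi>nm1 :: gridfun
  assumes N: "N > 0" and h: "h > 0" and dt: "dt > 0" and A: "A \<ge> 0" and \<theta>0: "\<theta>0 > 0"
    and per_\<phi>n: "per N \<phi>n" and per_\<phi>nm1: "per N \<phi>nm1"
    and gsum_eq: "gsum N \<phi>n = gsum N \<phi>nm1" and mean_less_one: "\<bar>gsum N \<phi>n / real N ^ 3\<bar> < 1"
begin

definition "extrap = (\<lambda>i j k. 2 * \<phi>n i j k - \<phi>nm1 i j k)"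

definition "\<tau> = 2 * dt / 3"

text \<open>The first equation of the scheme, solved for \<open>\<phi>\<close> with \<open>w\<close> in place of \<open>\<mu>\<close>.\<close>
definition "\<psi> w = (\<lambda>i j k. (2/3) * (2 * \<phi>n i j k - (1/2) * \<phi>nm1 i j k) + \<tau> * lap h w i j k)"

definition "\<mu> w = (\<lambda>i j k. mix_potential (\<psi> w i j k) - \<theta>0 * extrap i j k
   - A * dt * lap h (\<lambda>a b c. \<psi> w a b c - \<phi>n a b c) i j k - \<epsilon>\<^sup>2 * lap h (\<psi> w) i j k)"

definition "J w = gsum N (\<lambda>i j k. mix_entropy (\<psi> w i j k)) - \<theta>0 * gsum N (\<lambda>i j k. extrap i j k * \<psi> w i j k)
   + (A * dt / 2) * (dirichlet N (\<lambda>i j k. \<psi> w i j k - \<phi>n i j k) (\<lambda>i j k. \<psi> w i j k - \<phi>n i j k) / h\<^sup>2)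
   + (\<epsilon>\<^sup>2 / 2) * (dirichlet N (\<psi> w) (\<psi> w) / h\<^sup>2) + (\<tau> / 2) * (dirichlet N w w / h\<^sup>2)"

definition "admissible w \<longleftrightarrow> w 1 1 1 = 0 \<and> (\<forall>i j k. (i, j, k) \<in> cube N \<longrightarrow> \<bar>\<psi> w i j k\<bar> \<le> 1)"

lemma \<tau>_pos: "\<tau> > 0"
  unfolding \<tau>_def using dt by simp

lemma per_\<psi>: "per N w \<Longrightarrow> per N (\<psi> w)"
  unfolding \<psi>_def by (intro per_comb[OF per_comb[OF per_\<phi>n per_\<phi>nm1] per_lap])

lemma per_\<mu>: assumes "per N w" shows "per N (\<mu> w)"
proof -
  have "per N (\<lambda>i j k. \<psi> w i j k - \<phi>n i j k)" by (rule per_comb[OF per_\<psi>[OF assms] per_\<phi>n])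
  then show ?thesis unfolding \<mu>_def extrap_def
    using per_lap per_\<psi>[OF assms] per_\<phi>n per_\<phi>nm1 unfolding per_def by simp
qed

lemma \<psi>_add_smult: "\<psi> (\<lambda>i j k. w i j k + t * d i j k) = (\<lambda>i j k. \<psi> w i j k + t * (\<tau> * lap h d i j k))"
  unfolding \<psi>_def by (simp add: lap_add_smult algebra_simps)

lemma \<psi>_segment:
  "\<psi> (\<lambda>i j k. w i j k + t * (w1 i j k - w i j k)) = (\<lambda>i j k. \<psi> w i j k + t * (\<psi> w1 i j k - \<psi> w i j k))"
  unfolding \<psi>_add_smult by (simp add: \<psi>_def lap_diff fun_eq_iff algebra_simps)

lemma gsum_\<psi>: assumes "per N w" shows "gsum N (\<psi> w) = gsum N \<phi>n"
  using gsum_lap[OF assms, of h] gsum_eq unfolding \<psi>_def gsum_add gsum_cmult gsum_diff by simp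

text \<open>Solving a Poisson equation makes \<open>\<psi>(w)\<close> constant, equal to the mean of \<open>\<phi>\<^sup>n\<close>.\<close>
lemma strictly_admissible_exists: "\<exists>w. per N w \<and> admissible w \<and> (\<forall>i j k. \<bar>\<psi> w i j k\<bar> < 1)"
proof -
  define m where "m = gsum N \<phi>n / real N ^ 3"
  define f where "f = (\<lambda>i j k. inverse \<tau> * (m - (2/3) * (2 * \<phi>n i j k - (1/2) * \<phi>nm1 i j k)))"
  have "gsum N f = inverse \<tau> * (real N ^ 3 * m - (2/3) * (2 * gsum N \<phi>n - (1/2) * gsum N \<phi>nm1))"
    unfolding f_def by (simp only: gsum_cmult gsum_diff gsum_const)
  then have "gsum N f = 0" using gsum_eq N by (simp add: m_def)
  moreover have "per N f" unfolding f_def by (intro per_comb[OF per_\<phi>n per_\<phi>nm1])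
  ultimately obtain u where u: "per N u" "lap h u = f" using discrete_poisson[OF N, of h f] h by auto
  define w where "w i j k = u i j k - u 1 1 1" for i j k
  have "lap h w = lap h u" by (simp add: fun_eq_iff w_def lap_def algebra_simps)
  then have "\<psi> w = (\<lambda>i j k. m)" using \<tau>_pos u(2) by (auto simp: fun_eq_iff \<psi>_def f_def mult.assoc[symmetric])
  moreover have "per N w" unfolding w_def by (rule per_comb[OF u(1) per_const])
  ultimately show ?thesis using mean_less_one by (auto simp: admissible_def w_def m_def)
qed

lemma continuous_on_J: "continuous_on B (\<lambda>x. J (periodize N x))"
proof -
  have \<psi>: "grid_continuous_on B (\<lambda>x. \<psi> (periodize N x))"
    unfolding \<psi>_def
    by (intro grid_continuous_on_ops grid_continuous_on_const grid_continuous_on_cmult grid_continuous_on_lap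
        grid_continuous_on_periodize)
  show ?thesis
    unfolding J_def using h
    by (intro continuous_intros continuous_on_gsum continuous_on_dirichlet grid_continuous_on_mix_entropy
        grid_continuous_on_ops grid_continuous_on_const grid_continuous_on_periodize \<psi>) simp_all
qed

lemma closed_admissible: "closed {x. admissible (periodize N x)}"
proof -
  have "{x. admissible (periodize N x)} = {x. periodize N x 1 1 1 = 0}
      \<inter> (\<Inter>(i, j, k)\<in>cube N. {x. \<bar>\<psi> (periodize N x) i j k\<bar> \<le> 1})"
    unfolding admissible_def by auto
  moreover have "closed {x. \<bar>\<psi> (periodize N x) i j k\<bar> \<le> 1}" for i j k
    unfolding \<psi>_def lap_def using h by (intro closed_Collect_le continuous_intros) auto
  ultimately show ?thesis
    by (auto intro!: closed_Int closed_INT closed_Collect_eq continuous_intros)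
qed

lemma J_lower_bound:
  assumes "admissible w"
  shows "- \<theta>0 * gsum N (\<lambda>i j k. \<bar>extrap i j k\<bar>) + (\<tau> / 2) * (dirichlet N w w / h\<^sup>2) \<le> J w"
proof -
  have bounded: "\<bar>\<psi> w i j k\<bar> \<le> 1" if "(i, j, k) \<in> cube N" for i j k
    using assms that unfolding admissible_def by auto
  have "0 \<le> gsum N (\<lambda>i j k. mix_entropy (\<psi> w i j k))"
    using bounded mix_entropy_nonneg by (intro gsum_nonneg) auto
  moreover have "gsum N (\<lambda>i j k. extrap i j k * \<psi> w i j k) \<le> gsum N (\<lambda>i j k. \<bar>extrap i j k\<bar>)"
  proof (rule gsum_mono)
    fix i j k assume "(i, j, k) \<in> cube N"
    then have "\<bar>extrap i j k\<bar> * \<bar>\<psi> w i j k\<bar> \<le> \<bar>extrap i j k\<bar> * 1" using bounded by (intro mult_left_mono) auto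
    then show "extrap i j k * \<psi> w i j k \<le> \<bar>extrap i j k\<bar>" by (simp add: abs_mult[symmetric])
  qed
  then have "\<theta>0 * gsum N (\<lambda>i j k. extrap i j k * \<psi> w i j k) \<le> \<theta>0 * gsum N (\<lambda>i j k. \<bar>extrap i j k\<bar>)"
    using \<theta>0 by (intro mult_left_mono) auto
  moreover have "0 \<le> (A * dt / 2) * (dirichlet N (\<lambda>i j k. \<psi> w i j k - \<phi>n i j k) (\<lambda>i j k. \<psi> w i j k - \<phi>n i j k) / h\<^sup>2)"
    "0 \<le> (\<epsilon>\<^sup>2 / 2) * (dirichlet N (\<psi> w) (\<psi> w) / h\<^sup>2)"
    using A dt by (simp_all add: dirichlet_nonneg)
  ultimately show ?thesis unfolding J_def by linarith
qed

lemma J_minimiser_exists: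
  "\<exists>wm. per N wm \<and> admissible wm \<and> (\<forall>w. per N w \<longrightarrow> admissible w \<longrightarrow> J wm \<le> J w)"
proof -
  obtain w1 where w1: "per N w1" "admissible w1" using strictly_admissible_exists by blast
  define C where "C = (J w1 + \<theta>0 * gsum N (\<lambda>i j k. \<bar>extrap i j k\<bar>)) * 2 * h\<^sup>2 / \<tau>"
  show ?thesis
  proof (rule periodic_minimiser_exists[OF N closed_admissible continuous_on_J w1, where R = "3 * real N * sqrt C"])
    fix w i j k assume w: "per N w" "admissible w" "J w \<le> J w1" and p: "(i, j, k) \<in> cube N"
    have "(\<tau> / 2) * (dirichlet N w w / h\<^sup>2) \<le> J w1 + \<theta>0 * gsum N (\<lambda>i j k. \<bar>extrap i j k\<bar>)"
      using J_lower_bound[OF w(2)] w(3) by linarith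
    then have "(\<tau> / 2) * (dirichlet N w w / h\<^sup>2) * (2 * h\<^sup>2) \<le> (J w1 + \<theta>0 * gsum N (\<lambda>i j k. \<bar>extrap i j k\<bar>)) * (2 * h\<^sup>2)"
      by (rule mult_right_mono) simp
    then have "dirichlet N w w \<le> C" using \<tau>_pos h unfolding C_def by (simp add: pos_le_divide_eq algebra_simps)
    then have "3 * real N * sqrt (dirichlet N w w) \<le> 3 * real N * sqrt C" by (intro mult_left_mono) auto
    moreover have "\<bar>w i j k\<bar> \<le> 3 * real N * sqrt (dirichlet N w w)"
      using discrete_poincare[OF N w(1) _ p] w(2) unfolding admissible_def by auto
    ultimately show "\<bar>w i j k\<bar> \<le> 3 * real N * sqrt C" by linarith
  next
    fix wm assume "per N wm" "admissible wm" "\<And>w. per N w \<Longrightarrow> admissible w \<Longrightarrow> J wm \<le> J w"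
    then show ?thesis by blast
  qed
qed

text \<open>Along a segment, everything in \<open>J\<close> but the entropy is a quadratic polynomial in \<open>t\<close>
  with nonnegative leading coefficient, hence below its chord up to a linear term.\<close>
lemma J_segment_le:
  "\<exists>C. \<forall>t. 0 \<le> t \<longrightarrow> t \<le> 1 \<longrightarrow> J (\<lambda>i j k. w i j k + t * (w1 i j k - w i j k)) - J w
     \<le> gsum N (\<lambda>i j k. mix_entropy (\<psi> (\<lambda>i j k. w i j k + t * (w1 i j k - w i j k)) i j k))
       - gsum N (\<lambda>i j k. mix_entropy (\<psi> w i j k)) + t * C"
proof -
  let ?P = "\<psi> w" and ?P1 = "\<psi> w1"
  define d1 where "d1 = (\<lambda>i j k. (?P1 i j k - \<phi>n i j k) - (?P i j k - \<phi>n i j k))"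
  define d2 where "d2 = (\<lambda>i j k. ?P1 i j k - ?P i j k)"
  define d3 where "d3 = (\<lambda>i j k. w1 i j k - w i j k)"
  define K where "K = (A * dt / 2) * (dirichlet N d1 d1 / h\<^sup>2) + (\<epsilon>\<^sup>2 / 2) * (dirichlet N d2 d2 / h\<^sup>2)
     + (\<tau> / 2) * (dirichlet N d3 d3 / h\<^sup>2)"
  define L where "L = - \<theta>0 * gsum N (\<lambda>i j k. extrap i j k * d2 i j k)
     + (A * dt / 2) * (2 * dirichlet N (\<lambda>i j k. ?P i j k - \<phi>n i j k) d1 / h\<^sup>2)
     + (\<epsilon>\<^sup>2 / 2) * (2 * dirichlet N ?P d2 / h\<^sup>2) + (\<tau> / 2) * (2 * dirichlet N w d3 / h\<^sup>2)"
  have K: "K \<ge> 0" unfolding K_def using A dt \<tau>_pos by (simp add: dirichlet_nonneg)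
  show ?thesis
  proof (intro exI[of _ "L + K"] allI impI)
    fix t :: real assume t: "0 \<le> t" "t \<le> 1"
    define wt where "wt = (\<lambda>i j k. w i j k + t * (w1 i j k - w i j k))"
    have \<psi>_wt: "\<psi> wt = (\<lambda>i j k. ?P i j k + t * d2 i j k)" unfolding wt_def \<psi>_segment d2_def ..
    have shifted: "(\<lambda>i j k. \<psi> wt i j k - \<phi>n i j k) = (\<lambda>i j k. (?P i j k - \<phi>n i j k) + t * d1 i j k)"
      unfolding \<psi>_wt d1_def d2_def by (simp add: fun_eq_iff algebra_simps)
    have linear: "gsum N (\<lambda>i j k. extrap i j k * \<psi> wt i j k)
        = gsum N (\<lambda>i j k. extrap i j k * ?P i j k) + t * gsum N (\<lambda>i j k. extrap i j k * d2 i j k)"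
      unfolding \<psi>_wt gsum_add[symmetric] gsum_cmult[symmetric] by (rule gsum_cong) (simp add: algebra_simps)
    have wt: "wt = (\<lambda>i j k. w i j k + t * d3 i j k)" unfolding wt_def d3_def ..
    have "J wt - J w = (gsum N (\<lambda>i j k. mix_entropy (\<psi> wt i j k)) - gsum N (\<lambda>i j k. mix_entropy (?P i j k)))
        + t * L + t\<^sup>2 * K"
      unfolding J_def linear shifted
      unfolding \<psi>_wt
      unfolding wt dirichlet_add_smult K_def L_def
      using h by (simp add: field_simps)
    moreover have "t\<^sup>2 * K \<le> t * K" using t K by (simp add: power2_eq_square mult_right_mono mult_left_le_one_le)
    ultimately show "J wt - J w \<le> gsum N (\<lambda>i j k. mix_entropy (\<psi> wt i j k))
        - gsum N (\<lambda>i j k. mix_entropy (?P i j k)) + t * (L + K)"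
      by (simp add: distrib_left)
  qed
qed

lemma admissible_segment:
  assumes "admissible w" "admissible w1" "0 \<le> t" "t \<le> 1"
  shows "admissible (\<lambda>i j k. w i j k + t * (w1 i j k - w i j k))"
  unfolding admissible_def \<psi>_segment
proof (intro conjI allI impI)
  show "w 1 1 1 + t * (w1 1 1 1 - w 1 1 1) = 0" using assms(1,2) unfolding admissible_def by simp
  fix i j k assume "(i, j, k) \<in> cube N"
  then have "\<bar>\<psi> w i j k\<bar> \<le> 1" "\<bar>\<psi> w1 i j k\<bar> \<le> 1" using assms(1,2) unfolding admissible_def by auto
  then have "\<bar>(1 - t) * \<psi> w i j k + t * \<psi> w1 i j k\<bar> \<le> (1 - t) * 1 + t * 1"
    using assms(3,4) abs_triangle_ineq[of "(1 - t) * \<psi> w i j k" "t * \<psi> w1 i j k"]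
      mult_left_mono[of "\<bar>\<psi> w i j k\<bar>" 1 "1 - t"] mult_left_mono[of "\<bar>\<psi> w1 i j k\<bar>" 1 t]
    by (simp add: abs_mult)
  then show "\<bar>\<psi> w i j k + t * (\<psi> w1 i j k - \<psi> w i j k)\<bar> \<le> 1" by (simp add: algebra_simps)
qed

text \<open>If \<open>|\<psi>(w)| = 1\<close> at some point, moving towards a strictly admissible point lowers \<open>J\<close> by
  \<open>-s ln s\<close> there but raises it by at most \<open>O(s)\<close> elsewhere.\<close>
lemma minimiser_interior:
  assumes wm: "per N wm" "admissible wm" "\<And>w. per N w \<Longrightarrow> admissible w \<Longrightarrow> J wm \<le> J w"
    and p: "(a, b, c) \<in> cube N"
  shows "\<bar>\<psi> wm a b c\<bar> < 1"
proof (rule ccontr)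
  assume "\<not> \<bar>\<psi> wm a b c\<bar> < 1"
  then have edge: "\<bar>\<psi> wm a b c\<bar> = 1" using wm(2) p unfolding admissible_def by force
  obtain w1 where w1: "per N w1" "admissible w1" "\<forall>i j k. \<bar>\<psi> w1 i j k\<bar> < 1"
    using strictly_admissible_exists by blast
  obtain C where C: "\<And>t. 0 \<le> t \<Longrightarrow> t \<le> 1 \<Longrightarrow> J (\<lambda>i j k. wm i j k + t * (w1 i j k - wm i j k)) - J wm
      \<le> gsum N (\<lambda>i j k. mix_entropy (\<psi> (\<lambda>i j k. wm i j k + t * (w1 i j k - wm i j k)) i j k))
        - gsum N (\<lambda>i j k. mix_entropy (\<psi> wm i j k)) + t * C"
    using J_segment_le[of wm w1] by blast
  define C' where "C' = C + (gsum N (\<lambda>i j k. mix_entropy (\<psi> w1 i j k) - mix_entropy (\<psi> wm i j k))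
    - (mix_entropy (\<psi> w1 a b c) - mix_entropy (\<psi> wm a b c)))"
  have "\<bar>\<psi> w1 a b c - \<psi> wm a b c\<bar> > 0" using w1(3)[rule_format, of a b c] edge by auto
  then obtain t where t: "0 < t" "t \<le> 1" "t * C' + xlogx (t * \<bar>\<psi> w1 a b c - \<psi> wm a b c\<bar>) < 0"
    by (rule xlogx_beats_linear)
  have "J (\<lambda>i j k. wm i j k + t * (w1 i j k - wm i j k)) - J wm
      \<le> t * C' + xlogx (t * \<bar>\<psi> w1 a b c - \<psi> wm a b c\<bar>)"
    using C[of t] t gsum_mix_entropy_segment_le[of N "\<psi> wm" "\<psi> w1" a b c t] wm(2) w1(3) p edge
    unfolding \<psi>_segment C'_def admissible_def by (force simp: algebra_simps less_imp_le)
  moreover have "J wm \<le> J (\<lambda>i j k. wm i j k + t * (w1 i j k - wm i j k))"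
    using admissible_segment[OF wm(2) w1(2), of t] t
    by (intro wm(3) per_comb[OF wm(1) per_comb[OF w1(1) wm(1)]]) auto
  ultimately show False using t(3) by linarith
qed

lemma J_add_smult:
  assumes w: "per N w" and d: "per N d"
  shows "J (\<lambda>i j k. w i j k + t * d i j k)
    = gsum N (\<lambda>i j k. mix_entropy (\<psi> w i j k + t * (\<tau> * lap h d i j k)))
      + (J w - gsum N (\<lambda>i j k. mix_entropy (\<psi> w i j k)))
      + t * (- \<theta>0 * gsum N (\<lambda>i j k. extrap i j k * (\<tau> * lap h d i j k))
        + A * dt * (dirichlet N (\<lambda>i j k. \<psi> w i j k - \<phi>n i j k) (\<lambda>i j k. \<tau> * lap h d i j k) / h\<^sup>2)
        + \<epsilon>\<^sup>2 * (dirichlet N (\<psi> w) (\<lambda>i j k. \<tau> * lap h d i j k) / h\<^sup>2)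
        + \<tau> * (dirichlet N w d / h\<^sup>2))
      + t\<^sup>2 * ((A * dt / 2 + \<epsilon>\<^sup>2 / 2) * (dirichlet N (\<lambda>i j k. \<tau> * lap h d i j k) (\<lambda>i j k. \<tau> * lap h d i j k) / h\<^sup>2)
        + (\<tau> / 2) * (dirichlet N d d / h\<^sup>2))"
proof -
  define e where "e = (\<lambda>i j k. \<tau> * lap h d i j k)"
  have e_pointwise: "\<tau> * lap h d i j k = e i j k" for i j k unfolding e_def ..
  have shifted: "(\<lambda>i j k. \<psi> w i j k + t * e i j k - \<phi>n i j k) = (\<lambda>i j k. (\<psi> w i j k - \<phi>n i j k) + t * e i j k)"
    by (simp add: fun_eq_iff algebra_simps)
  have linear: "gsum N (\<lambda>i j k. extrap i j k * (\<psi> w i j k + t * e i j k))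
      = gsum N (\<lambda>i j k. extrap i j k * \<psi> w i j k) + t * gsum N (\<lambda>i j k. extrap i j k * e i j k)"
    unfolding gsum_add[symmetric] gsum_cmult[symmetric] by (rule gsum_cong) (simp add: algebra_simps)
  show ?thesis
    unfolding J_def \<psi>_add_smult e_pointwise e_def[symmetric]
    unfolding shifted linear dirichlet_add_smult
    using h by (simp add: field_simps)
qed

lemma has_real_derivative_add_quadratic:
  "(f has_real_derivative f') (at 0) \<Longrightarrow> ((\<lambda>t. f t + c + t * s + t\<^sup>2 * k) has_real_derivative f' + s) (at 0)"
  by (auto intro!: derivative_eq_intros)

lemma J_has_derivative:
  assumes w: "per N w" and d: "per N d"
    and interior: "\<And>i j k. (i, j, k) \<in> cube N \<Longrightarrow> \<bar>\<psi> w i j k\<bar> < 1"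
  shows "((\<lambda>t. J (\<lambda>i j k. w i j k + t * d i j k)) has_real_derivative
           \<tau> * gsum N (\<lambda>i j k. (lap h (\<mu> w) i j k - lap h w i j k) * d i j k)) (at 0)"
proof -
  define e where "e = (\<lambda>i j k. \<tau> * lap h d i j k)"
  have e_pointwise: "\<tau> * lap h d i j k = e i j k" for i j k unfolding e_def ..
  have per_e: "per N e" unfolding e_def by (intro per_comb[OF per_lap[OF d] per_const])
  have "((\<lambda>t. mix_entropy (\<psi> w i j k + t * e i j k)) has_real_derivative mix_potential (\<psi> w i j k) * e i j k) (at 0)"
    if "(i, j, k) \<in> cube N" for i j k
    by (rule has_real_derivative_mix_entropy_line[OF interior[OF that]])
  then have "((\<lambda>t. gsum N (\<lambda>i j k. mix_entropy (\<psi> w i j k + t * e i j k))) has_real_derivative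
      gsum N (\<lambda>i j k. mix_potential (\<psi> w i j k) * e i j k)) (at 0)"
    unfolding gsum_def by (intro DERIV_sum) (auto simp: cube_def)
  from has_real_derivative_add_quadratic[OF this]
  have "((\<lambda>t. J (\<lambda>i j k. w i j k + t * d i j k)) has_real_derivative
      gsum N (\<lambda>i j k. mix_potential (\<psi> w i j k) * e i j k)
      + (- \<theta>0 * gsum N (\<lambda>i j k. extrap i j k * e i j k)
        + A * dt * (dirichlet N (\<lambda>i j k. \<psi> w i j k - \<phi>n i j k) e / h\<^sup>2)
        + \<epsilon>\<^sup>2 * (dirichlet N (\<psi> w) e / h\<^sup>2) + \<tau> * (dirichlet N w d / h\<^sup>2))) (at 0)"
    unfolding J_add_smult[OF w d] e_pointwise e_def[symmetric] .
  also have "dirichlet N (\<lambda>i j k. \<psi> w i j k - \<phi>n i j k) e / h\<^sup>2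
      = - gsum N (\<lambda>i j k. lap h (\<lambda>a b c. \<psi> w a b c - \<phi>n a b c) i j k * e i j k)"
    using gsum_lap_mult[OF per_comb[OF per_\<psi>[OF w] per_\<phi>n] per_e, of h] by simp
  also have "dirichlet N (\<psi> w) e / h\<^sup>2 = - gsum N (\<lambda>i j k. lap h (\<psi> w) i j k * e i j k)"
    using gsum_lap_mult[OF per_\<psi>[OF w] per_e, of h] by simp
  also have "dirichlet N w d / h\<^sup>2 = - gsum N (\<lambda>i j k. lap h w i j k * d i j k)"
    using gsum_lap_mult[OF w d, of h] by simp
  also have "gsum N (\<lambda>i j k. mix_potential (\<psi> w i j k) * e i j k)
      = gsum N (\<lambda>i j k. \<mu> w i j k * e i j k) + \<theta>0 * gsum N (\<lambda>i j k. extrap i j k * e i j k)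
        + A * dt * gsum N (\<lambda>i j k. lap h (\<lambda>a b c. \<psi> w a b c - \<phi>n a b c) i j k * e i j k)
        + \<epsilon>\<^sup>2 * gsum N (\<lambda>i j k. lap h (\<psi> w) i j k * e i j k)"
    unfolding gsum_cmult[symmetric] gsum_add[symmetric] by (rule gsum_cong) (simp add: \<mu>_def algebra_simps)
  also have "gsum N (\<lambda>i j k. \<mu> w i j k * e i j k) = \<tau> * gsum N (\<lambda>i j k. \<mu> w i j k * lap h d i j k)"
    unfolding e_def gsum_cmult[symmetric] by (simp add: mult.left_commute)
  also have "gsum N (\<lambda>i j k. \<mu> w i j k * lap h d i j k) = gsum N (\<lambda>i j k. lap h (\<mu> w) i j k * d i j k)"
    using gsum_lap_mult_sym[OF per_\<mu>[OF w] d, of h] by simp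
  finally show ?thesis by (simp add: left_diff_distrib gsum_diff right_diff_distrib algebra_simps)
qed

lemma admissible_perturbation:
  assumes "admissible w" and interior: "\<And>i j k. (i, j, k) \<in> cube N \<Longrightarrow> \<bar>\<psi> w i j k\<bar> < 1"
    and d: "d 1 1 1 = 0" "\<And>i j k. \<bar>d i j k\<bar> \<le> 1"
  shows "\<exists>\<delta> > 0. \<forall>y. \<bar>y\<bar> < \<delta> \<longrightarrow> admissible (\<lambda>i j k. w i j k + y * d i j k)"
proof -
  define \<eta> where "\<eta> = Min ((\<lambda>(i, j, k). 1 - \<bar>\<psi> w i j k\<bar>) ` cube N)"
  have \<eta>: "\<eta> > 0" unfolding \<eta>_def using finite_cube cube_nonempty[OF N] interior by (subst Min_gr_iff) auto
  have \<eta>_le: "\<eta> \<le> 1 - \<bar>\<psi> w i j k\<bar>" if "(i, j, k) \<in> cube N" for i j k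
    unfolding \<eta>_def using finite_cube that by (intro Min_le) force+
  define K where "K = \<tau> * (12 / h\<^sup>2)"
  have K: "K > 0" unfolding K_def using \<tau>_pos h by simp
  have lap_d: "\<bar>\<tau> * lap h d i j k\<bar> \<le> K" for i j k
  proof -
    have "\<bar>lap h d i j k\<bar> \<le> 12 / h\<^sup>2" by (rule abs_lap_le[OF d(2)])
    then have "\<tau> * \<bar>lap h d i j k\<bar> \<le> \<tau> * (12 / h\<^sup>2)" using \<tau>_pos by (intro mult_left_mono) auto
    then show ?thesis using \<tau>_pos unfolding K_def abs_mult by simp
  qed
  show ?thesis
  proof (intro exI[of _ "\<eta> / K"] conjI allI impI)
    show "\<eta> / K > 0" using \<eta> K by simp
    fix y assume y: "\<bar>y\<bar> < \<eta> / K"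
    have small: "\<bar>y * (\<tau> * lap h d i j k)\<bar> \<le> \<eta>" for i j k
    proof -
      have "\<bar>y * (\<tau> * lap h d i j k)\<bar> \<le> \<bar>y\<bar> * K" unfolding abs_mult[of y] by (rule mult_left_mono[OF lap_d]) simp
      also have "\<dots> \<le> \<eta>" using y K by (simp add: pos_less_divide_eq less_imp_le)
      finally show ?thesis .
    qed
    then show "admissible (\<lambda>i j k. w i j k + y * d i j k)"
      unfolding admissible_def \<psi>_add_smult
    proof (intro conjI allI impI)
      show "w 1 1 1 + y * d 1 1 1 = 0" using assms(1) d(1) by (simp add: admissible_def)
      fix i j k assume "(i, j, k) \<in> cube N"
      then show "\<bar>\<psi> w i j k + y * (\<tau> * lap h d i j k)\<bar> \<le> 1"
        using abs_triangle_ineq[of "\<psi> w i j k" "y * (\<tau> * lap h d i j k)"] small[of i j k]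
          \<eta>_le[of i j k] by linarith
    qed
  qed
qed

lemma euler_lagrange:
  assumes wm: "per N wm" "admissible wm" "\<And>w. per N w \<Longrightarrow> admissible w \<Longrightarrow> J wm \<le> J w"
    and p: "(a, b, c) \<in> cube N" "(a, b, c) \<noteq> (1, 1, 1)"
  shows "lap h (\<mu> wm) a b c = lap h wm a b c"
proof -
  let ?d = "delta N a b c"
  have interior: "\<And>i j k. (i, j, k) \<in> cube N \<Longrightarrow> \<bar>\<psi> wm i j k\<bar> < 1"
    using minimiser_interior[OF wm] by blast
  have d0: "?d 1 1 1 = 0" using p N by (simp add: delta_on_cube cube_def)
  have "\<exists>\<delta> > 0. \<forall>y. \<bar>y\<bar> < \<delta> \<longrightarrow> admissible (\<lambda>i j k. wm i j k + y * ?d i j k)"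
    by (rule admissible_perturbation[where d = "delta N a b c", OF wm(2) interior d0 abs_delta_le])
  then obtain \<delta> where \<delta>: "\<delta> > 0" "\<And>y. \<bar>y\<bar> < \<delta> \<Longrightarrow> admissible (\<lambda>i j k. wm i j k + y * ?d i j k)"
    by blast
  have "\<forall>y. \<bar>0 - y\<bar> < \<delta> \<longrightarrow> J (\<lambda>i j k. wm i j k + 0 * ?d i j k) \<le> J (\<lambda>i j k. wm i j k + y * ?d i j k)"
    using wm(3)[OF per_comb[OF wm(1) per_delta] \<delta>(2)] by simp
  with J_has_derivative[OF wm(1) per_delta interior] \<delta>(1)
  have "\<tau> * gsum N (\<lambda>i j k. (lap h (\<mu> wm) i j k - lap h wm i j k) * ?d i j k) = 0"
    by (rule DERIV_local_min)
  then show ?thesis using \<tau>_pos gsum_mult_delta[OF p(1)] by simp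
qed

lemma existence:
  "\<exists>\<phi>. per N \<phi> \<and> (\<exists>\<mu>. per N \<mu> \<and> bdf2_eqs h \<epsilon> \<theta>0 dt A \<phi>n \<phi>nm1 \<phi> \<mu>)
     \<and> gsum N \<phi> = gsum N \<phi>n \<and> (\<forall>i j k. (i, j, k) \<in> cube N \<longrightarrow> \<bar>\<phi> i j k\<bar> < 1)"
proof -
  obtain wm where wm: "per N wm" "admissible wm" "\<And>w. per N w \<Longrightarrow> admissible w \<Longrightarrow> J wm \<le> J w"
    using J_minimiser_exists by blast
  have "lap h (\<mu> wm) i j k - lap h wm i j k = 0" if "(i, j, k) \<in> cube N" "(i, j, k) \<noteq> (1, 1, 1)" for i j k
    using euler_lagrange[OF wm that] by simp
  moreover have "gsum N (\<lambda>i j k. lap h (\<mu> wm) i j k - lap h wm i j k) = 0"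
    using gsum_lap[OF per_\<mu>[OF wm(1)]] gsum_lap[OF wm(1)] by (simp add: gsum_diff)
  ultimately have "(\<lambda>i j k. lap h (\<mu> wm) i j k - lap h wm i j k) = (\<lambda>i j k. 0)"
    by (intro zero_if_gsum_zero[OF N per_comb[OF per_lap[OF per_\<mu>[OF wm(1)]] per_lap[OF wm(1)]]])
  then have "lap h (\<mu> wm) = lap h wm" by (auto simp: fun_eq_iff)
  then have "bdf2_eqs h \<epsilon> \<theta>0 dt A \<phi>n \<phi>nm1 (\<psi> wm) (\<mu> wm)"
    using dt unfolding bdf2_eqs_def \<psi>_def \<mu>_def \<tau>_def mix_potential_def extrap_def by (simp add: field_simps)
  then show ?thesis
    using per_\<psi>[OF wm(1)] per_\<mu>[OF wm(1)] gsum_\<psi>[OF wm(1)] minimiser_interior[OF wm] by blast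
qed

lemma unique_solution:
  "\<exists>!\<phi>. per N \<phi> \<and> (\<exists>\<mu>. per N \<mu> \<and> bdf2_eqs h \<epsilon> \<theta>0 dt A \<phi>n \<phi>nm1 \<phi> \<mu>)
     \<and> gsum N \<phi> = gsum N \<phi>n \<and> (\<forall>i j k. (i, j, k) \<in> cube N \<longrightarrow> \<bar>\<phi> i j k\<bar> < 1)"
proof (rule ex_ex1I[OF existence])
  fix \<phi>1 \<phi>2
  assume "per N \<phi>1 \<and> (\<exists>\<mu>. per N \<mu> \<and> bdf2_eqs h \<epsilon> \<theta>0 dt A \<phi>n \<phi>nm1 \<phi>1 \<mu>)
      \<and> gsum N \<phi>1 = gsum N \<phi>n \<and> (\<forall>i j k. (i, j, k) \<in> cube N \<longrightarrow> \<bar>\<phi>1 i j k\<bar> < 1)"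
    and "per N \<phi>2 \<and> (\<exists>\<mu>. per N \<mu> \<and> bdf2_eqs h \<epsilon> \<theta>0 dt A \<phi>n \<phi>nm1 \<phi>2 \<mu>)
      \<and> gsum N \<phi>2 = gsum N \<phi>n \<and> (\<forall>i j k. (i, j, k) \<in> cube N \<longrightarrow> \<bar>\<phi>2 i j k\<bar> < 1)"
  then show "\<phi>1 = \<phi>2" using bdf2_solution_unique[OF N h dt A] by blast
qed

end

lemma gmean_eq_gsum: "L > 0 \<Longrightarrow> N > 0 \<Longrightarrow> gmean L N \<nu> = gsum N \<nu> / real N ^ 3"
  unfolding gmean_def ginner_def gsum_def by (simp add: field_simps)

lemma gsupnorm_less_one_iff:
  assumes "N > 0"
  shows "gsupnorm N \<phi> < 1 \<longleftrightarrow> (\<forall>i j k. (i, j, k) \<in> cube N \<longrightarrow> \<bar>\<phi> i j k\<bar> < 1)"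
proof -
  have "{\<bar>\<phi> i j k\<bar> | i j k. i \<in> {1..int N} \<and> j \<in> {1..int N} \<and> k \<in> {1..int N}}
      = (\<lambda>(i, j, k). \<bar>\<phi> i j k\<bar>) ` cube N"
    unfolding cube_def by (rule set_eqI) (auto simp: image_iff simp del: atLeastAtMost_iff)
  then show ?thesis
    unfolding gsupnorm_def using finite_cube cube_nonempty[OF assms] by (subst Max_less_iff) auto
qed

theorem theorem6p1:
  fixes L \<epsilon> \<theta>0 dt A M :: real and N :: nat and \<phi>n \<phi>nm1 :: gridfun
  assumes "L > 0" and "N > 0" and "\<epsilon> > 0" and "\<theta>0 > 0" and "dt > 0" and "A \<ge> 0"
    and "M > 0"
    and "per N \<phi>n" and "per N \<phi>nm1"
    and "gsupnorm N \<phi>n \<le> M" and "gsupnorm N \<phi>nm1 \<le> M"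
    and "\<bar>gmean L N \<phi>n\<bar> = \<bar>gmean L N \<phi>nm1\<bar>" and "\<bar>gmean L N \<phi>n\<bar> < 1"
    and "gmean L N \<phi>n = gmean L N \<phi>nm1"
  shows "\<exists>!\<phi>. per N \<phi> \<and>
           (\<exists>\<mu>. per N \<mu> \<and>
              (\<forall>i j k. ((3/2) * \<phi> i j k - 2 * \<phi>n i j k + (1/2) * \<phi>nm1 i j k) / dt
                         = lap (L / real N) \<mu> i j k) \<and>
              (\<forall>i j k. \<mu> i j k = ln (1 + \<phi> i j k) - ln (1 - \<phi> i j k)
                         - \<theta>0 * (2 * \<phi>n i j k - \<phi>nm1 i j k)
                         - A * dt * lap (L / real N) (\<lambda>a b c. \<phi> a b c - \<phi>n a b c) i j k
                         - \<epsilon>^2 * lap (L / real N) \<phi> i j k)) \<and>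
           gmean L N (\<lambda>i j k. \<phi> i j k - gmean L N \<phi>n) = 0 \<and>
           gsupnorm N \<phi> < 1"
proof -
  note gmean = gmean_eq_gsum[OF \<open>L > 0\<close> \<open>N > 0\<close>]
  interpret bdf2_scheme N "L / real N" \<epsilon> \<theta>0 dt A \<phi>n \<phi>nm1
    using assms by unfold_locales (auto simp: gmean)
  have "gmean L N (\<lambda>i j k. \<phi> i j k - gmean L N \<phi>n) = 0 \<longleftrightarrow> gsum N \<phi> = gsum N \<phi>n" for \<phi>
    using \<open>N > 0\<close> by (simp add: gmean gsum_diff gsum_const)
  then show ?thesis
    using unique_solution unfolding bdf2_eqs_def gsupnorm_less_one_iff[OF \<open>N > 0\<close>] by simp
qed

end
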